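(* The set $\mathbb{V}_P$ of eigenvalues of $-P$ satisfies $$\mathbb{V}_P\subset\Big\{\lambda\in\mathbb{C}:\ \Re\lambda\le-\frac{\nu\pi^2}{a^2}\ \text{ and }\ |\Im\lambda|\le2\alpha+2a\sqrt{\beta\gamma}\sqrt{-\frac{\Re\lambda}{\nu}}\Big\}.$$
   Context: Let $a>0$, $\nu>0$, $\alpha\ge0$, $\beta,\gamma>0$, $\mathbb{T}^2=(\mathbb{R}/2\pi\mathbb{Z})^2$, $\Omega=\mathbb{T}^2\times(0,a)$. $\mathcal{V}=\mathcal{V}_1\times\mathcal{V}_2$, where $\mathcal{V}_1$ is the closure in $H^1(\Omega)^2$ of smooth $(u,v)$ periodic in $x,y$, vanishing at $z=0$ and $z=a$, with $\int_0^a(\partial_xu+\partial_yv)\,dz=0$ for all $(x,y)$, and $\mathcal{V}_2$ is the closure in $H^1(\Omega)$ of smooth $\theta$ periodic in $x,y$ vanishing at $z=0,a$. For $X=(u,v,\theta)$, $X'=(u',v',\theta')\in\mathcal{V}$: $(X,X')_{\mathcal{H}}=\int_\Omega(u\bar u'+v\bar v'+\frac\beta\gamma\theta\bar\theta')$, $(X,X')_{\mathcal{V}}=\int_\Omega(\nabla u\cdot\nabla\bar u'+\nabla v\cdot\nabla\bar v'+\frac\beta\gamma\nabla\theta\cdot\nabla\bar\theta')$; $w=-\int_0^z(\partial_xu+\partial_yv)dz'$, $w'=-\int_0^z(\partial_xu'+\partial_yv')dz'$; $B(X,X')=-\int_\Omega\theta\bar w'+\int_\Omega w\bar\theta'$;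 $C(X,X')=-\int_\Omega v\bar u'+\int_\Omega u\bar v'$; $\langle PX,X'\rangle=\nu(X,X')_{\mathcal{V}}+\beta B(X,X')+\alpha C(X,X')$. The eigenvalue set is $\mathbb{V}_P=\{\lambda\in\mathbb{C}:\exists X\in\mathcal{V},X\ne0,\ \lambda(X,X')_{\mathcal{H}}+\langle PX,X'\rangle=0\ \forall X'\in\mathcal{V}\}$. *)

theory Defs
  imports "HOL-Analysis.Analysis"
begin

type_synonym pt = "real \<times> real \<times> real"
type_synonym fn = "pt \<Rightarrow> complex"
type_synonym grad = "pt \<Rightarrow> pt \<Rightarrow> complex"
  \<comment> \<open>grad: D i p is the partial derivative in direction i \<in> Basis at point p\<close>

text \<open>Fundamental domain of Omega = T^2 x (0,a); points are (x,y,z).\<close>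
definition Om :: "real \<Rightarrow> pt set" where
  "Om a = {0..<2*pi} \<times> {0..<2*pi} \<times> {0<..<a}"

abbreviation MOm :: "real \<Rightarrow> pt measure" where
  "MOm a \<equiv> lebesgue_on (Om a)"

definition ex :: pt where "ex = (1, 0, 0)"
definition ey :: pt where "ey = (0, 1, 0)"

primrec Ck :: "nat \<Rightarrow> ('a::euclidean_space \<Rightarrow> 'b::real_normed_vector) \<Rightarrow> bool" where
  "Ck 0 f = continuous_on UNIV f"
| "Ck (Suc k) f = ((\<forall>x. f differentiable (at x)) \<and>
      (\<forall>i\<in>Basis. Ck k (\<lambda>x. frechet_derivative f (at x) i)))"

definition smooth_fun :: "('a::euclidean_space \<Rightarrow> 'b::real_normed_vector) \<Rightarrow> bool" where
  "smooth_fun f \<longleftrightarrow> (\<forall>k. Ck k f)"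

definition periodic_xy :: "fn \<Rightarrow> bool" where
  "periodic_xy f \<longleftrightarrow> (\<forall>x y z. f (x + 2*pi, y, z) = f (x, y, z) \<and> f (x, y + 2*pi, z) = f (x, y, z))"

definition pd :: "fn \<Rightarrow> grad" where
  "pd f i p = frechet_derivative f (at p) i"

definition test0 :: "real \<Rightarrow> fn \<Rightarrow> bool" where
  "test0 a f \<longleftrightarrow> smooth_fun f \<and> periodic_xy f \<and> (\<forall>x y. f (x, y, 0) = 0 \<and> f (x, y, a) = 0)"

definition cc_test :: "real \<Rightarrow> fn \<Rightarrow> bool" where
  "cc_test a f \<longleftrightarrow> smooth_fun f \<and> periodic_xy f \<and>
     (\<exists>\<delta>>0. \<forall>x y z. (z \<le> \<delta> \<or> a - \<delta> \<le> z) \<longrightarrow> f (x, y, z) = 0)"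

definition L2 :: "real \<Rightarrow> fn \<Rightarrow> bool" where
  "L2 a f \<longleftrightarrow> f \<in> borel_measurable (MOm a) \<and> integrable (MOm a) (\<lambda>p. (cmod (f p))\<^sup>2)"

definition weak_deriv :: "real \<Rightarrow> fn \<Rightarrow> pt \<Rightarrow> fn \<Rightarrow> bool" where
  "weak_deriv a f i g \<longleftrightarrow> (\<forall>\<phi>. cc_test a \<phi> \<longrightarrow>
     (LINT p|MOm a. f p * pd \<phi> i p) = - (LINT p|MOm a. g p * \<phi> p))"

definition H1 :: "real \<Rightarrow> fn \<Rightarrow> grad \<Rightarrow> bool" where
  "H1 a f D \<longleftrightarrow> L2 a f \<and> (\<forall>i\<in>Basis. L2 a (D i) \<and> weak_deriv a f i (D i))"

definition H1dist2 :: "real \<Rightarrow> fn \<Rightarrow> grad \<Rightarrow> fn \<Rightarrow> real" where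
  "H1dist2 a f D g = (LINT p|MOm a. (cmod (f p - g p))\<^sup>2) +
     (\<Sum>i\<in>Basis. LINT p|MOm a. (cmod (D i p - pd g i p))\<^sup>2)"

definition div_constraint :: "real \<Rightarrow> fn \<Rightarrow> fn \<Rightarrow> bool" where
  "div_constraint a \<phi> \<psi> \<longleftrightarrow> (\<forall>x y.
     (LINT z:{0..a}|lborel. pd \<phi> ex (x, y, z) + pd \<psi> ey (x, y, z)) = 0)"

text \<open>membership in V_1 (closure in H^1(Omega)^2) and V_2 (closure in H^1(Omega))\<close>
definition inV1 :: "real \<Rightarrow> fn \<Rightarrow> grad \<Rightarrow> fn \<Rightarrow> grad \<Rightarrow> bool" where
  "inV1 a u Du v Dv \<longleftrightarrow> H1 a u Du \<and> H1 a v Dv \<and>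
     (\<forall>\<epsilon>>0. \<exists>\<phi> \<psi>. test0 a \<phi> \<and> test0 a \<psi> \<and> div_constraint a \<phi> \<psi> \<and>
        H1dist2 a u Du \<phi> + H1dist2 a v Dv \<psi> < \<epsilon>)"

definition inV2 :: "real \<Rightarrow> fn \<Rightarrow> grad \<Rightarrow> bool" where
  "inV2 a \<theta> D\<theta> \<longleftrightarrow> H1 a \<theta> D\<theta> \<and> (\<forall>\<epsilon>>0. \<exists>\<phi>. test0 a \<phi> \<and> H1dist2 a \<theta> D\<theta> \<phi> < \<epsilon>)"

definition inV :: "real \<Rightarrow> fn \<Rightarrow> grad \<Rightarrow> fn \<Rightarrow> grad \<Rightarrow> fn \<Rightarrow> grad \<Rightarrow> bool" where
  "inV a u Du v Dv \<theta> D\<theta> \<longleftrightarrow> inV1 a u Du v Dv \<and> inV2 a \<theta> D\<theta>"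

definition wfun :: "grad \<Rightarrow> grad \<Rightarrow> fn" where
  "wfun Du Dv p = (case p of (x, y, z) \<Rightarrow>
     - (LINT t:{0..z}|lborel. Du ex (x, y, t) + Dv ey (x, y, t)))"

definition gradip :: "grad \<Rightarrow> grad \<Rightarrow> pt \<Rightarrow> complex" where
  "gradip D D' p = (\<Sum>i\<in>Basis. D i p * cnj (D' i p))"

definition Hform :: "real \<Rightarrow> real \<Rightarrow> real \<Rightarrow> fn \<Rightarrow> fn \<Rightarrow> fn \<Rightarrow> fn \<Rightarrow> fn \<Rightarrow> fn \<Rightarrow> complex" where
  "Hform a \<beta> \<gamma> u v \<theta> u' v' \<theta>' = (LINT p|MOm a.
     u p * cnj (u' p) + v p * cnj (v' p) + complex_of_real (\<beta> / \<gamma>) * \<theta> p * cnj (\<theta>' p))"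

definition Vform :: "real \<Rightarrow> real \<Rightarrow> real \<Rightarrow> grad \<Rightarrow> grad \<Rightarrow> grad \<Rightarrow> grad \<Rightarrow> grad \<Rightarrow> grad \<Rightarrow> complex" where
  "Vform a \<beta> \<gamma> Du Dv D\<theta> Du' Dv' D\<theta>' = (LINT p|MOm a.
     gradip Du Du' p + gradip Dv Dv' p + complex_of_real (\<beta> / \<gamma>) * gradip D\<theta> D\<theta>' p)"

definition Bform :: "real \<Rightarrow> fn \<Rightarrow> grad \<Rightarrow> grad \<Rightarrow> fn \<Rightarrow> grad \<Rightarrow> grad \<Rightarrow> complex" where
  "Bform a \<theta> Du Dv \<theta>' Du' Dv' =
     - (LINT p|MOm a. \<theta> p * cnj (wfun Du' Dv' p)) + (LINT p|MOm a. wfun Du Dv p * cnj (\<theta>' p))"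

definition Cform :: "real \<Rightarrow> fn \<Rightarrow> fn \<Rightarrow> fn \<Rightarrow> fn \<Rightarrow> complex" where
  "Cform a u v u' v' = - (LINT p|MOm a. v p * cnj (u' p)) + (LINT p|MOm a. u p * cnj (v' p))"

definition eigP :: "real \<Rightarrow> real \<Rightarrow> real \<Rightarrow> real \<Rightarrow> real \<Rightarrow> complex set" where
  "eigP a \<nu> \<alpha> \<beta> \<gamma> = {lam. \<exists>u Du v Dv \<theta> D\<theta>. inV a u Du v Dv \<theta> D\<theta> \<and>
     \<not> (AE p in MOm a. u p = 0 \<and> v p = 0 \<and> \<theta> p = 0) \<and>
     (\<forall>u' Du' v' Dv' \<theta>' D\<theta>'. inV a u' Du' v' Dv' \<theta>' D\<theta>' \<longrightarrow>
        lam * Hform a \<beta> \<gamma> u v \<theta> u' v' \<theta>'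
        + (complex_of_real \<nu> * Vform a \<beta> \<gamma> Du Dv D\<theta> Du' Dv' D\<theta>'
           + complex_of_real \<beta> * Bform a \<theta> Du Dv \<theta>' Du' Dv'
           + complex_of_real \<alpha> * Cform a u v u' v') = 0)}"

end

theory Submission
  imports Defs
begin

text \<open>Testing the eigenvalue equation against the eigenvector \<open>X\<close> itself gives
  \<open>\<lambda> H + \<nu> V + \<beta> (J - cnj J) + \<alpha> (K - cnj K) = 0\<close>, where \<open>H\<close> and \<open>V\<close> are the squared
  \<open>\<H>\<close>- and \<open>\<V>\<close>-norms of \<open>X\<close>, \<open>J = \<integral> w cnj \<theta>\<close> and \<open>K = \<integral> u cnj v\<close>.
  The real part is \<open>Re \<lambda> H = - \<nu> V\<close>. Wirtinger's inequality in the vertical variable (the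
  fields vanish at \<open>z = 0\<close> and \<open>z = a\<close>), proved for smooth fields and passed to their
  \<open>H\<^sup>1\<close>-limits, gives \<open>H \<le> (a/\<pi>)\<^sup>2 V\<close> and hence \<open>Re \<lambda> \<le> - \<nu> \<pi>\<^sup>2 / a\<^sup>2\<close>.
  The imaginary part is controlled by \<open>2 |K| \<le> H\<close> and by the Hardy-type estimate
  \<open>\<parallel>w\<parallel>\<^sup>2 \<le> a\<^sup>2/2 \<parallel>\<partial>\<^sub>x u + \<partial>\<^sub>y v\<parallel>\<^sup>2\<close>, obtained from Cauchy--Schwarz along vertical segments;
  together with \<open>V = (- Re \<lambda> / \<nu>) H\<close> this gives the bound on \<open>|Im \<lambda>|\<close>.\<close>

definition ez :: pt where "ez = (0, 0, 1)"

lemma Basis_pt: "(Basis :: pt set) = {ex, ey, ez}"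
  by (auto simp: Basis_prod_def ex_def ey_def ez_def zero_prod_def)

lemma ez_in_Basis: "ez \<in> Basis"
  by (simp add: Basis_pt)

lemma Om_borel: "Om a \<in> sets borel"
proof -
  have "{0..<2*pi} \<times> ({0..<2*pi} \<times> {0<..<a}) \<in> sets (borel \<Otimes>\<^sub>M (borel \<Otimes>\<^sub>M (borel::real measure)))"
    by (intro pair_measureI) auto
  then show ?thesis by (simp only: Om_def borel_prod)
qed

lemma Om_lebesgue: "Om a \<in> sets lebesgue"
  using Om_borel by simp

lemma Om_bounded: "bounded (Om a)"
proof -
  have "Om a \<subseteq> cbox (0, 0, 0) (2*pi, 2*pi, \<bar>a\<bar>)"
    by (auto simp: Om_def cbox_def Basis_pt ex_def ey_def ez_def inner_prod_def)
  then show ?thesis using bounded_cbox bounded_subset by blast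
qed

lemma Om_lmeasurable: "Om a \<in> lmeasurable"
proof -
  have "Om a \<in> sets lborel" using Om_borel by simp
  then show ?thesis
    using emeasure_bounded_finite[OF Om_bounded] by (simp add: fmeasurable_def)
qed

lemma finite_measure_MOm: "finite_measure (MOm a)"
  by (rule finite_measure_lebesgue_on[OF Om_lmeasurable])

lemma indicator_Om: "(indicator (Om a) (x, y, z) :: ennreal) =
   indicator {0..<2*pi} x * indicator {0..<2*pi} y * indicator {0<..<a} z"
  by (simp add: Om_def indicator_def)

lemma nn_integral_lborel_pair:
  fixes h :: "'a::euclidean_space \<times> 'b::euclidean_space \<Rightarrow> ennreal"
  assumes "h \<in> borel_measurable borel"
  shows "(\<integral>\<^sup>+p. h p \<partial>lborel) = (\<integral>\<^sup>+x. \<integral>\<^sup>+y. h (x, y) \<partial>lborel \<partial>lborel)"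
proof -
  have "h \<in> borel_measurable (lborel \<Otimes>\<^sub>M lborel)"
    using assms by (simp add: lborel_prod measurable_lborel2)
  from lborel.nn_integral_fst[OF this] show ?thesis
    by (simp add: lborel_prod)
qed

lemma nn_integral_lborel_pt:
  fixes h :: "pt \<Rightarrow> ennreal"
  assumes h: "h \<in> borel_measurable borel"
  shows "(\<integral>\<^sup>+p. h p \<partial>lborel) = (\<integral>\<^sup>+x. \<integral>\<^sup>+y. \<integral>\<^sup>+z. h (x, y, z) \<partial>lborel \<partial>lborel \<partial>lborel)"
proof -
  have "\<And>x. (\<lambda>q. h (x, q)) \<in> borel_measurable borel"
    using h by measurable
  then show ?thesis
    unfolding nn_integral_lborel_pair[OF h] by (intro nn_integral_cong nn_integral_lborel_pair)
qed

lemma nn_integral_MOm_iterated: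
  fixes h :: "pt \<Rightarrow> ennreal"
  assumes h: "h \<in> borel_measurable borel"
  shows "(\<integral>\<^sup>+p. h p \<partial>MOm a) =
    (\<integral>\<^sup>+x. \<integral>\<^sup>+y. \<integral>\<^sup>+z. h (x, y, z) * indicator (Om a) (x, y, z) \<partial>lborel \<partial>lborel \<partial>lborel)"
proof -
  have "(\<integral>\<^sup>+p. h p \<partial>MOm a) = (\<integral>\<^sup>+p. h p * indicator (Om a) p \<partial>lebesgue)"
    by (rule nn_integral_restrict_space) (simp add: Om_lebesgue)
  also have "\<dots> = (\<integral>\<^sup>+p. h p * indicator (Om a) p \<partial>lborel)"
    by (rule nn_integral_completion)
  also have "\<dots> = (\<integral>\<^sup>+x. \<integral>\<^sup>+y. \<integral>\<^sup>+z. h (x, y, z) * indicator (Om a) (x, y, z) \<partial>lborel \<partial>lborel \<partial>lborel)"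
    by (intro nn_integral_lborel_pt borel_measurable_times_ennreal borel_measurable_indicator Om_borel h)
  finally show ?thesis .
qed

section \<open>Wirtinger's inequality\<close>

lemma x_cos_le_sin:
  assumes "0 < x" "x < pi/2"
  shows "x * cos x \<le> sin x"
proof -
  have "x \<le> tan x" using assms tan_pos_pi2_le[of x] abs_tan_ge[of x] by auto
  moreover have "cos x > 0" using assms by (intro cos_gt_zero) auto
  ultimately show ?thesis by (simp add: tan_def pos_le_divide_eq)
qed

lemma Picone_inequality:
  fixes k s c y y' :: real
  assumes "s \<noteq> 0" and "s\<^sup>2 + c\<^sup>2 = 1"
  shows "- (k\<^sup>2 / s\<^sup>2) * y\<^sup>2 + k * c / s * (2 * y * y') \<le> y'\<^sup>2 - k\<^sup>2 * y\<^sup>2"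
proof -
  have "k\<^sup>2 / s\<^sup>2 = k\<^sup>2 * (s\<^sup>2 + c\<^sup>2) / s\<^sup>2"
    using assms by simp
  also have "\<dots> = k\<^sup>2 + (k * c / s)\<^sup>2"
    using assms(1) by (simp add: field_simps)
  finally have "y'\<^sup>2 - k\<^sup>2 * y\<^sup>2 - (- (k\<^sup>2 / s\<^sup>2) * y\<^sup>2 + k * c / s * (2 * y * y')) = (y' - k * c / s * y)\<^sup>2"
    by (simp add: power2_eq_square algebra_simps)
  then show ?thesis
    by (metis diff_ge_0_iff_ge zero_le_power2)
qed

lemma has_real_derivative_cot_weight:
  assumes f: "(f has_real_derivative f'z) (at z)" and s: "sin (k * z) \<noteq> 0"
  shows "((\<lambda>z. k * cos (k * z) / sin (k * z) * (f z)\<^sup>2) has_real_derivative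
      - (k\<^sup>2 / (sin (k * z))\<^sup>2) * (f z)\<^sup>2 + k * cos (k * z) / sin (k * z) * (2 * f z * f'z)) (at z)"
  apply (rule derivative_eq_intros refl f | simp add: s)+
  using s apply (simp add: field_simps power2_eq_square)
  using sin_cos_squared_add3[of "k * z"] by algebra

lemma Picone_integral_bound:
  fixes f f' :: "real \<Rightarrow> real"
  assumes k: "k > 0" and f': "\<And>x. (f has_real_derivative f' x) (at x)"
    and cont_f': "continuous_on UNIV f'" and lu: "0 < l" "l \<le> u" "k * u < pi"
  shows "k * cos (k * u) / sin (k * u) * (f u)\<^sup>2 - k * cos (k * l) / sin (k * l) * (f l)\<^sup>2
    \<le> integral {l..u} (\<lambda>z. (f' z)\<^sup>2 - k\<^sup>2 * (f z)\<^sup>2)"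
proof -
  define c where "c z = k * cos (k * z) / sin (k * z)" for z
  define D where "D z = - (k\<^sup>2 / (sin (k * z))\<^sup>2) * (f z)\<^sup>2 + c z * (2 * f z * f' z)" for z
  have sin_pos: "sin (k * z) > 0" if "z \<in> {l..u}" for z
  proof (rule sin_gt_zero)
    show "0 < k * z" using that k lu by simp
    have "k * z \<le> k * u" using that k by (intro mult_left_mono) auto
    then show "k * z < pi" using lu by linarith
  qed
  have cont_f: "continuous_on UNIV f"
    using f' by (intro has_real_derivative_imp_continuous_on) auto
  have deriv: "((\<lambda>z. c z * (f z)\<^sup>2) has_real_derivative D z) (at z)" if "z \<in> {l..u}" for z
    using has_real_derivative_cot_weight[OF f', where z = z and k = k] sin_pos[OF that]
    by (simp add: c_def[abs_def] D_def)
  have "(D has_integral c u * (f u)\<^sup>2 - c l * (f l)\<^sup>2) {l..u}"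
    using lu by (intro fundamental_theorem_of_calculus)
      (auto simp: has_real_derivative_iff_has_vector_derivative[symmetric]
        intro!: has_field_derivative_at_within deriv)
  moreover have "(\<lambda>z. (f' z)\<^sup>2 - k\<^sup>2 * (f z)\<^sup>2) integrable_on {l..u}"
    by (intro integrable_continuous_interval continuous_intros continuous_on_subset[OF cont_f]
        continuous_on_subset[OF cont_f']) auto
  ultimately have "c u * (f u)\<^sup>2 - c l * (f l)\<^sup>2 \<le> integral {l..u} (\<lambda>z. (f' z)\<^sup>2 - k\<^sup>2 * (f z)\<^sup>2)"
  proof (rule has_integral_le[OF _ integrable_integral])
    fix z assume "z \<in> {l..u}"
    then have "sin (k * z) \<noteq> 0" using sin_pos by force
    then show "D z \<le> (f' z)\<^sup>2 - k\<^sup>2 * (f z)\<^sup>2"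
      unfolding D_def c_def by (intro Picone_inequality) auto
  qed
  then show ?thesis by (simp add: c_def)
qed

lemma cot_weight_boundary_le:
  fixes k \<delta> L x y :: real
  assumes k: "k > 0" and \<delta>: "0 < \<delta>" "k * \<delta> < pi/2"
    and xy: "\<bar>x\<bar> \<le> L * \<delta>" "\<bar>y\<bar> \<le> L * \<delta>"
  shows "k * cos (k * \<delta>) / sin (k * \<delta>) * (x\<^sup>2 + y\<^sup>2) \<le> 2 * L\<^sup>2 * \<delta>"
proof -
  have k\<delta>: "0 < k * \<delta>" using k \<delta> by simp
  then have "sin (k * \<delta>) > 0" "cos (k * \<delta>) > 0"
    using \<delta> by (auto intro: sin_gt_zero cos_gt_zero)
  then have c: "0 \<le> k * cos (k * \<delta>) / sin (k * \<delta>)" "k * cos (k * \<delta>) / sin (k * \<delta>) \<le> 1 / \<delta>"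
    using k \<delta> x_cos_le_sin[OF k\<delta> \<delta>(2)] by (auto simp: field_simps)
  have "x\<^sup>2 \<le> (L * \<delta>)\<^sup>2" "y\<^sup>2 \<le> (L * \<delta>)\<^sup>2"
    using xy by (metis abs_ge_zero power2_abs power_mono)+
  then have "k * cos (k * \<delta>) / sin (k * \<delta>) * (x\<^sup>2 + y\<^sup>2) \<le> (1 / \<delta>) * (2 * (L * \<delta>)\<^sup>2)"
    using c \<delta> by (intro mult_mono) auto
  also have "\<dots> = 2 * L\<^sup>2 * \<delta>" using \<delta> by (simp add: power2_eq_square field_simps)
  finally show ?thesis .
qed

text \<open>The weight \<open>k cot (k z)\<close>, \<open>k = \<pi>/a\<close>, blows up at both ends of \<open>(0, a)\<close>; the boundary terms
  on \<open>[\<delta>, a - \<delta>]\<close> are nevertheless \<open>O(\<delta>)\<close> because \<open>f\<close> vanishes at \<open>0\<close> and \<open>a\<close>.\<close>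
lemma wirtinger_real:
  fixes f f' :: "real \<Rightarrow> real"
  assumes a: "a > 0" and f': "\<And>x. (f has_real_derivative f' x) (at x)"
    and cont_f': "continuous_on UNIV f'" and f0: "f 0 = 0" and fa: "f a = 0"
  shows "0 \<le> integral {0..a} (\<lambda>z. (f' z)\<^sup>2 - (pi/a)\<^sup>2 * (f z)\<^sup>2)"
proof -
  define k where "k = pi / a"
  define F where "F = (\<lambda>z. (f' z)\<^sup>2 - k\<^sup>2 * (f z)\<^sup>2)"
  define c where "c = (\<lambda>z. k * cos (k * z) / sin (k * z))"
  have k: "k > 0" using a by (simp add: k_def)
  have cont_f: "continuous_on UNIV f"
    using f' by (intro has_real_derivative_imp_continuous_on) auto
  have cont_F: "continuous_on UNIV F"
    unfolding F_def by (intro continuous_intros cont_f cont_f')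
  have F_int: "F integrable_on {l..u}" for l u
    by (rule integrable_continuous_interval) (rule continuous_on_subset[OF cont_F], auto)
  obtain M where M: "\<And>z. z \<in> {0..a} \<Longrightarrow> norm (F z) \<le> M"
    using continuous_on_compact_bound[OF compact_Icc continuous_on_subset[OF cont_F subset_UNIV]] by blast
  obtain L where L: "\<And>z. z \<in> {0..a} \<Longrightarrow> norm (f' z) \<le> L"
    using continuous_on_compact_bound[OF compact_Icc continuous_on_subset[OF cont_f' subset_UNIV]] by blast
  have ends: "- (M * (u - l)) \<le> integral {l..u} F" if "0 \<le> l" "l \<le> u" "u \<le> a" for l u
  proof -
    have "norm (integral {l..u} F) \<le> M * (u - l)"
      using that M by (intro integral_bound continuous_on_subset[OF cont_F]) auto
    then show ?thesis by (simp add: abs_le_iff)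
  qed
  have Lipschitz: "norm (f x - f y) \<le> L * norm (x - y)" if "x \<in> {0..a}" "y \<in> {0..a}" for x y
    using that L f' by (intro field_differentiable_bound[where S = "{0..a}" and f' = f'])
      (auto intro: has_field_derivative_at_within)
  have near_ends: "- (2 * M + 2 * L\<^sup>2) * \<delta> \<le> integral {0..a} F" if \<delta>: "0 < \<delta>" "\<delta> < a/2" for \<delta>
  proof -
    have "k * (a - \<delta>) < pi" using \<delta> k a by (simp add: k_def field_simps)
    then have middle: "c (a - \<delta>) * (f (a - \<delta>))\<^sup>2 - c \<delta> * (f \<delta>)\<^sup>2 \<le> integral {\<delta>..a-\<delta>} F"
      unfolding c_def F_def using \<delta> by (intro Picone_integral_bound[OF k f' cont_f']) auto
    have "k * (a - \<delta>) = pi - k * \<delta>" using a by (simp add: k_def field_simps)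
    then have c_sym: "c (a - \<delta>) = - c \<delta>" by (simp add: c_def)
    have "k * \<delta> < pi/2" using \<delta> a by (simp add: k_def field_simps)
    moreover have "\<bar>f (a - \<delta>)\<bar> \<le> L * \<delta>" "\<bar>f \<delta>\<bar> \<le> L * \<delta>"
      using Lipschitz[of \<delta> 0] Lipschitz[of "a - \<delta>" a] \<delta> f0 fa by auto
    ultimately have boundary: "c \<delta> * ((f (a - \<delta>))\<^sup>2 + (f \<delta>)\<^sup>2) \<le> 2 * L\<^sup>2 * \<delta>"
      unfolding c_def using k \<delta> by (intro cot_weight_boundary_le)
    have "integral {0..a} F = integral {0..\<delta>} F + integral {\<delta>..a-\<delta>} F + integral {a-\<delta>..a} F"
      using \<delta> F_int by (simp add: Henstock_Kurzweil_Integration.integral_combine)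
    then show ?thesis
      using ends[of 0 \<delta>] ends[of "a - \<delta>" a] middle boundary c_sym \<delta> by (simp add: algebra_simps)
  qed
  have "((\<lambda>\<delta>. - (2 * M + 2 * L\<^sup>2) * \<delta>) \<longlongrightarrow> 0) (at_right 0)"
    by (intro tendsto_eq_intros) auto
  moreover have "eventually (\<lambda>\<delta>. - (2 * M + 2 * L\<^sup>2) * \<delta> \<le> integral {0..a} F) (at_right 0)"
    unfolding eventually_at_right_field using a near_ends by (intro exI[of _ "a/2"]) auto
  ultimately have "0 \<le> integral {0..a} F"
    by (rule tendsto_upperbound) simp
  then show ?thesis by (simp add: F_def k_def)
qed

lemma wirtinger_complex:
  fixes g g' :: "real \<Rightarrow> complex"
  assumes a: "a > 0" and g': "\<And>x. (g has_vector_derivative g' x) (at x)"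
    and cont_g': "continuous_on UNIV g'" and g0: "g 0 = 0" and ga: "g a = 0"
  shows "(pi/a)\<^sup>2 * integral {0..a} (\<lambda>z. (cmod (g z))\<^sup>2) \<le> integral {0..a} (\<lambda>z. (cmod (g' z))\<^sup>2)"
proof -
  have cont_g: "continuous_on UNIV g"
    using g' by (intro continuous_at_imp_continuous_on) (auto intro: has_vector_derivative_continuous)
  have int: "h integrable_on {0..a}" if "continuous_on UNIV h" for h :: "real \<Rightarrow> real"
    by (rule integrable_continuous_interval, rule continuous_on_subset[OF that]) auto
  have "0 \<le> integral {0..a} (\<lambda>z. (Re (g' z))\<^sup>2 - (pi/a)\<^sup>2 * (Re (g z))\<^sup>2)
      + integral {0..a} (\<lambda>z. (Im (g' z))\<^sup>2 - (pi/a)\<^sup>2 * (Im (g z))\<^sup>2)"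
    using a g' by (intro add_nonneg_nonneg wirtinger_real)
      (auto intro!: derivative_intros continuous_intros cont_g' simp: g0 ga)
  also have "\<dots> = integral {0..a} (\<lambda>z. (cmod (g' z))\<^sup>2 - (pi/a)\<^sup>2 * (cmod (g z))\<^sup>2)"
    by (subst integral_add[symmetric]) (auto intro!: int continuous_intros cont_g cont_g'
        simp: cmod_power2 algebra_simps)
  also have "\<dots> = integral {0..a} (\<lambda>z. (cmod (g' z))\<^sup>2) - (pi/a)\<^sup>2 * integral {0..a} (\<lambda>z. (cmod (g z))\<^sup>2)"
    by (subst integral_diff) (auto intro!: int continuous_intros cont_g cont_g')
  finally show ?thesis by simp
qed

lemma wirtinger_nn_integral:
  fixes g g' :: "real \<Rightarrow> complex"
  assumes a: "a > 0" and g': "\<And>x. (g has_vector_derivative g' x) (at x)"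
    and cont_g': "continuous_on UNIV g'" and g0: "g 0 = 0" and ga: "g a = 0"
  shows "(\<integral>\<^sup>+z. ennreal ((cmod (g z))\<^sup>2) * indicator {0<..<a} z \<partial>lborel)
     \<le> (\<integral>\<^sup>+z. ennreal ((a/pi)\<^sup>2 * (cmod (g' z))\<^sup>2) * indicator {0<..<a} z \<partial>lborel)"
proof -
  have cont_g: "continuous_on UNIV g"
    using g' by (intro continuous_at_imp_continuous_on) (auto intro: has_vector_derivative_continuous)
  have int: "(h has_integral integral {0..a} h) {0<..<a}" if "continuous_on UNIV h" for h :: "real \<Rightarrow> real"
  proof -
    have "h integrable_on {0..a}"
      using that by (intro integrable_continuous_interval) (auto elim: continuous_on_subset)
    then have "(h has_integral integral {0..a} h) (cbox 0 a)"
      by (simp add: integrable_integral)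
    then show ?thesis
      by (simp only: has_integral_open_interval flip: box_real)
  qed
  have "integral {0..a} (\<lambda>z. (cmod (g z))\<^sup>2) \<le> (a/pi)\<^sup>2 * integral {0..a} (\<lambda>z. (cmod (g' z))\<^sup>2)"
    using wirtinger_complex[OF assms] a by (simp add: power_divide field_simps)
  moreover have "(\<integral>\<^sup>+z. ennreal ((cmod (g z))\<^sup>2) * indicator {0<..<a} z \<partial>lborel)
      = ennreal (integral {0..a} (\<lambda>z. (cmod (g z))\<^sup>2))"
    by (rule nn_integral_has_integral_lebesgue') (auto intro!: int continuous_intros cont_g)
  moreover have "(\<integral>\<^sup>+z. ennreal ((a/pi)\<^sup>2 * (cmod (g' z))\<^sup>2) * indicator {0<..<a} z \<partial>lborel)
      = ennreal ((a/pi)\<^sup>2 * integral {0..a} (\<lambda>z. (cmod (g' z))\<^sup>2))"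
    by (rule nn_integral_has_integral_lebesgue')
      (auto intro!: has_integral_mult_right int continuous_intros cont_g')
  ultimately show ?thesis
    by (simp add: ennreal_leI)
qed

section \<open>The Poincar\'e inequality on \<open>\<V>\<close>\<close>

lemma test0_smoothness:
  assumes "test0 a \<phi>"
  shows "continuous_on UNIV \<phi>" and "\<And>p. \<phi> differentiable (at p)"
    and "\<And>i. i \<in> Basis \<Longrightarrow> continuous_on UNIV (pd \<phi> i)"
proof -
  have "\<And>k. Ck k \<phi>" using assms by (simp add: test0_def smooth_fun_def)
  from this[of 0] this[of 1] show "continuous_on UNIV \<phi>" "\<And>p. \<phi> differentiable (at p)"
    "\<And>i. i \<in> Basis \<Longrightarrow> continuous_on UNIV (pd \<phi> i)"
    by (auto simp: pd_def[abs_def])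
qed

lemma has_vector_derivative_vertical:
  assumes "\<phi> differentiable (at (x, y, z))"
  shows "((\<lambda>z. \<phi> (x, y, z)) has_vector_derivative pd \<phi> ez (x, y, z)) (at z)"
proof -
  let ?D = "frechet_derivative \<phi> (at (x, y, z))"
  have D: "(\<phi> has_derivative ?D) (at (x, y, z))"
    using assms frechet_derivative_works by blast
  have "((\<lambda>z::real. (x, y, z)) has_derivative (\<lambda>h. h *\<^sub>R ez)) (at z)"
    by (auto intro!: derivative_eq_intros simp: ez_def)
  from diff_chain_at[OF this D] have "((\<lambda>z. \<phi> (x, y, z)) has_derivative (\<lambda>h. h *\<^sub>R ?D ez)) (at z)"
    using linear_scale[OF has_derivative_linear[OF D]] by (simp add: o_def)
  then show ?thesis by (simp add: has_vector_derivative_def pd_def)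
qed

lemma L2_continuous:
  assumes "continuous_on UNIV h"
  shows "L2 a h"
  unfolding L2_def
proof
  show meas: "h \<in> borel_measurable (MOm a)"
    by (rule continuous_imp_measurable_on_sets_lebesgue[OF continuous_on_subset[OF assms] Om_lebesgue]) auto
  obtain B where B: "\<And>p. p \<in> closure (Om a) \<Longrightarrow> norm (h p) \<le> B"
    using continuous_on_compact_bound[OF compact_closure[THEN iffD2, OF Om_bounded]
        continuous_on_subset[OF assms subset_UNIV]] by metis
  show "integrable (MOm a) (\<lambda>p. (cmod (h p))\<^sup>2)"
  proof (rule finite_measure.integrable_const_bound[OF finite_measure_MOm])
    show "AE p in MOm a. norm ((cmod (h p))\<^sup>2) \<le> B\<^sup>2"
    proof (rule AE_I2)
      fix p assume "p \<in> space (MOm a)"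
      then have "p \<in> closure (Om a)" using closure_subset by auto
      then show "norm ((cmod (h p))\<^sup>2) \<le> B\<^sup>2" using B by (simp add: power_mono)
    qed
  qed (use meas in measurable)
qed

definition L2_sqnorm :: "real \<Rightarrow> fn \<Rightarrow> real" where
  "L2_sqnorm a f = (LINT p|MOm a. (cmod (f p))\<^sup>2)"

lemma L2_sqnorm_nonneg: "0 \<le> L2_sqnorm a f"
  by (simp add: L2_sqnorm_def)

lemma poincare_test0:
  assumes a: "a > 0" and \<phi>: "test0 a \<phi>"
  shows "L2_sqnorm a \<phi> \<le> (a/pi)\<^sup>2 * L2_sqnorm a (pd \<phi> ez)"
proof -
  note smooth = test0_smoothness[OF \<phi>]
  have cont_z: "continuous_on UNIV (pd \<phi> ez)"
    by (rule smooth(3)[OF ez_in_Basis])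
  have [measurable]: "\<phi> \<in> borel_measurable borel" "pd \<phi> ez \<in> borel_measurable borel"
    using smooth(1) cont_z by (auto intro: borel_measurable_continuous_onI)
  have m1: "(\<lambda>p. ennreal ((cmod (\<phi> p))\<^sup>2)) \<in> borel_measurable borel"
    and m2: "(\<lambda>p. ennreal ((a/pi)\<^sup>2 * (cmod (pd \<phi> ez p))\<^sup>2)) \<in> borel_measurable borel"
    by measurable
  have "(\<integral>\<^sup>+p. ennreal ((cmod (\<phi> p))\<^sup>2) \<partial>MOm a)
      \<le> (\<integral>\<^sup>+p. ennreal ((a/pi)\<^sup>2 * (cmod (pd \<phi> ez p))\<^sup>2) \<partial>MOm a)"
    unfolding nn_integral_MOm_iterated[OF m1] nn_integral_MOm_iterated[OF m2]
  proof (rule nn_integral_mono, rule nn_integral_mono)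
    fix x y
    have "(\<integral>\<^sup>+z. ennreal ((cmod (\<phi> (x, y, z)))\<^sup>2) * indicator {0<..<a} z \<partial>lborel)
        \<le> (\<integral>\<^sup>+z. ennreal ((a/pi)\<^sup>2 * (cmod (pd \<phi> ez (x, y, z)))\<^sup>2) * indicator {0<..<a} z \<partial>lborel)"
      using \<phi> smooth(2) by (intro wirtinger_nn_integral[OF a] has_vector_derivative_vertical
          continuous_on_compose2[OF cont_z]) (auto intro!: continuous_intros simp: test0_def)
    then show "(\<integral>\<^sup>+z. ennreal ((cmod (\<phi> (x, y, z)))\<^sup>2) * indicator (Om a) (x, y, z) \<partial>lborel)
      \<le> (\<integral>\<^sup>+z. ennreal ((a/pi)\<^sup>2 * (cmod (pd \<phi> ez (x, y, z)))\<^sup>2) * indicator (Om a) (x, y, z) \<partial>lborel)"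
      by (cases "x \<in> {0..<2*pi} \<and> y \<in> {0..<2*pi}") (auto simp: indicator_Om mult_ac)
  qed
  moreover have "integrable (MOm a) (\<lambda>p. (cmod (\<phi> p))\<^sup>2)"
    "integrable (MOm a) (\<lambda>p. (a/pi)\<^sup>2 * (cmod (pd \<phi> ez p))\<^sup>2)"
    using L2_continuous[OF smooth(1)] L2_continuous[OF cont_z] by (auto simp: L2_def)
  ultimately show ?thesis
    by (simp add: L2_sqnorm_def nn_integral_eq_integral ennreal_le_iff integral_nonneg_AE)
qed

lemma norm_sq_le_split:
  fixes x y :: "'a::real_normed_vector"
  assumes s: "s > 0"
  shows "(norm x)\<^sup>2 \<le> (1 + s) * (norm y)\<^sup>2 + (1 + 1/s) * (norm (x - y))\<^sup>2"
proof -
  define p q where "p = norm y" and "q = norm (x - y)"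
  have "norm x \<le> p + q"
    using norm_triangle_ineq[of y "x - y"] by (simp add: p_def q_def)
  then have "(norm x)\<^sup>2 \<le> (p + q)\<^sup>2" by (simp add: power_mono)
  moreover have "0 \<le> (s * p - q)\<^sup>2 / s" using s by simp
  then have "2 * p * q \<le> s * p\<^sup>2 + q\<^sup>2 / s"
    using s by (simp add: field_simps power2_eq_square)
  ultimately show ?thesis
    by (simp add: p_def[symmetric] q_def[symmetric] power2_eq_square algebra_simps add_divide_distrib)
qed

lemma norm_diff_sq_le:
  fixes x y :: "'a::real_normed_vector"
  shows "(norm (x - y))\<^sup>2 \<le> 2 * (norm x)\<^sup>2 + 2 * (norm y)\<^sup>2"
  using norm_sq_le_split[of 1 "x - y" x] by (simp add: norm_minus_commute)

lemma borel_measurable_cnj [measurable (raw)]: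
  "f \<in> borel_measurable M \<Longrightarrow> (\<lambda>x. cnj (f x :: complex)) \<in> borel_measurable M"
proof -
  assume "f \<in> borel_measurable M"
  moreover have "cnj \<in> borel_measurable (borel :: complex measure)"
    by (intro borel_measurable_continuous_onI continuous_intros)
  ultimately show ?thesis
    by (rule measurable_compose)
qed

lemma L2_measurable [measurable_dest]: "L2 a f \<Longrightarrow> f \<in> borel_measurable (MOm a)"
  by (simp add: L2_def)

lemma L2_integrable_sq: "L2 a f \<Longrightarrow> integrable (MOm a) (\<lambda>p. (cmod (f p))\<^sup>2)"
  by (simp add: L2_def)

lemma L2_diff:
  assumes f: "L2 a f" and g: "L2 a g"
  shows "L2 a (\<lambda>p. f p - g p)"
  unfolding L2_def
proof
  show meas: "(\<lambda>p. f p - g p) \<in> borel_measurable (MOm a)"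
    using f g by measurable
  show "integrable (MOm a) (\<lambda>p. (cmod (f p - g p))\<^sup>2)"
  proof (rule Bochner_Integration.integrable_bound)
    show "integrable (MOm a) (\<lambda>p. 2 * (cmod (f p))\<^sup>2 + 2 * (cmod (g p))\<^sup>2)"
      using f g by (simp add: L2_integrable_sq)
    show "AE p in MOm a. norm ((cmod (f p - g p))\<^sup>2) \<le> norm (2 * (cmod (f p))\<^sup>2 + 2 * (cmod (g p))\<^sup>2)"
      using norm_diff_sq_le by (auto intro!: AE_I2 simp del: norm_minus_commute)
  qed (use meas in measurable)
qed

lemma L2_add:
  assumes "L2 a f" and "L2 a g"
  shows "L2 a (\<lambda>p. f p + g p)"
proof -
  have "L2 a (\<lambda>p. - g p)" using assms(2) by (simp add: L2_def)
  from L2_diff[OF assms(1) this] show ?thesis by simp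
qed

lemma L2_integrable_mult_cnj:
  assumes f: "L2 a f" and g: "L2 a g"
  shows "integrable (MOm a) (\<lambda>p. f p * cnj (g p))"
proof (rule Bochner_Integration.integrable_bound)
  show "integrable (MOm a) (\<lambda>p. (cmod (f p))\<^sup>2 + (cmod (g p))\<^sup>2)"
    using f g by (simp add: L2_integrable_sq)
  show "(\<lambda>p. f p * cnj (g p)) \<in> borel_measurable (MOm a)"
    using f g by measurable
  have "cmod u * cmod v \<le> (cmod u)\<^sup>2 + (cmod v)\<^sup>2" for u v
  proof -
    have "2 * (cmod u * cmod v) \<le> (cmod u)\<^sup>2 + (cmod v)\<^sup>2"
      using sum_squares_bound[of "cmod u" "cmod v"] by (simp add: mult.assoc)
    moreover have "0 \<le> cmod u * cmod v" by simp
    ultimately show ?thesis by linarith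
  qed
  then show "AE p in MOm a. norm (f p * cnj (g p)) \<le> norm ((cmod (f p))\<^sup>2 + (cmod (g p))\<^sup>2)"
    by (intro AE_I2) (simp add: norm_mult)
qed

lemma L2_sqnorm_le_split:
  assumes f: "L2 a f" and g: "L2 a g" and s: "s > 0"
  shows "L2_sqnorm a f \<le> (1 + s) * L2_sqnorm a g + (1 + 1/s) * L2_sqnorm a (\<lambda>p. f p - g p)"
proof -
  have "L2_sqnorm a f
      \<le> (LINT p|MOm a. (1 + s) * (cmod (g p))\<^sup>2 + (1 + 1/s) * (cmod (f p - g p))\<^sup>2)"
    unfolding L2_sqnorm_def using f g L2_diff[OF f g] norm_sq_le_split[OF s]
    by (intro integral_mono) (auto simp: L2_integrable_sq)
  also have "\<dots> = (1 + s) * L2_sqnorm a g + (1 + 1/s) * L2_sqnorm a (\<lambda>p. f p - g p)"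
    using g L2_diff[OF f g] by (simp add: L2_sqnorm_def L2_integrable_sq)
  finally show ?thesis .
qed

lemma le_of_forall_pos_le_add_mult:
  fixes F X K :: real
  assumes "\<And>e. e > 0 \<Longrightarrow> F \<le> X + K * e"
  shows "F \<le> X"
proof (rule tendsto_lowerbound)
  show "((\<lambda>e. X + K * e) \<longlongrightarrow> X) (at_right 0)"
    by (auto intro!: tendsto_eq_intros)
  show "\<forall>\<^sub>F e in at_right 0. F \<le> X + K * e"
    using assms by (auto simp: eventually_at_right_field intro: exI[of _ 1])
qed simp

text \<open>The splitting constant \<open>1 + s\<close> absorbs the approximation error, which is sent to \<open>0\<close>
  before \<open>s\<close>.\<close>
lemma poincare_closure:
  assumes a: "a > 0" and f: "L2 a f" and g: "L2 a g"
    and approx: "\<And>\<epsilon>. \<epsilon> > 0 \<Longrightarrow> \<exists>\<phi>. test0 a \<phi> \<and>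
        L2_sqnorm a (\<lambda>p. f p - \<phi> p) < \<epsilon> \<and> L2_sqnorm a (\<lambda>p. g p - pd \<phi> ez p) < \<epsilon>"
  shows "L2_sqnorm a f \<le> (a/pi)\<^sup>2 * L2_sqnorm a g"
proof -
  define c where "c = (a/pi)\<^sup>2"
  have c: "c \<ge> 0" by (simp add: c_def)
  have approx_split: "L2_sqnorm a f \<le> (1 + s)\<^sup>2 * c * L2_sqnorm a g + ((1 + s) * c + 1) * (1 + 1/s) * \<epsilon>"
    if s: "s > 0" and \<epsilon>: "\<epsilon> > 0" for s \<epsilon>
  proof -
    obtain \<phi> where \<phi>: "test0 a \<phi>" and e1: "L2_sqnorm a (\<lambda>p. f p - \<phi> p) < \<epsilon>"
      and e2: "L2_sqnorm a (\<lambda>p. g p - pd \<phi> ez p) < \<epsilon>"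
      using approx[OF \<epsilon>] by blast
    note smooth = test0_smoothness[OF \<phi>]
    have L2_\<phi>: "L2 a \<phi>" and L2_\<phi>z: "L2 a (pd \<phi> ez)"
      using L2_continuous[OF smooth(1)] L2_continuous[OF smooth(3)[OF ez_in_Basis]] by auto
    have s': "0 \<le> 1 + 1/s" using s by simp
    have "L2_sqnorm a (\<lambda>p. pd \<phi> ez p - g p) = L2_sqnorm a (\<lambda>p. g p - pd \<phi> ez p)"
      by (simp add: L2_sqnorm_def norm_minus_commute)
    then have "L2_sqnorm a (pd \<phi> ez) \<le> (1 + s) * L2_sqnorm a g + (1 + 1/s) * \<epsilon>"
      using L2_sqnorm_le_split[OF L2_\<phi>z g s] mult_left_mono[OF less_imp_le[OF e2] s'] by simp
    then have "c * L2_sqnorm a (pd \<phi> ez) \<le> c * ((1 + s) * L2_sqnorm a g + (1 + 1/s) * \<epsilon>)"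
      using c by (rule mult_left_mono)
    then have "L2_sqnorm a \<phi> \<le> c * ((1 + s) * L2_sqnorm a g + (1 + 1/s) * \<epsilon>)"
      using poincare_test0[OF a \<phi>] unfolding c_def by linarith
    then have "(1 + s) * L2_sqnorm a \<phi> \<le> (1 + s) * (c * ((1 + s) * L2_sqnorm a g + (1 + 1/s) * \<epsilon>))"
      using s by (intro mult_left_mono) auto
    moreover have "L2_sqnorm a f \<le> (1 + s) * L2_sqnorm a \<phi> + (1 + 1/s) * \<epsilon>"
      using L2_sqnorm_le_split[OF f L2_\<phi> s] mult_left_mono[OF less_imp_le[OF e1] s'] by linarith
    ultimately have "L2_sqnorm a f \<le> (1 + s) * (c * ((1 + s) * L2_sqnorm a g + (1 + 1/s) * \<epsilon>)) + (1 + 1/s) * \<epsilon>"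
      by linarith
    also have "\<dots> = (1 + s)\<^sup>2 * c * L2_sqnorm a g + ((1 + s) * c + 1) * (1 + 1/s) * \<epsilon>"
      unfolding power2_eq_square by algebra
    finally show ?thesis .
  qed
  have "L2_sqnorm a f \<le> (1 + s)\<^sup>2 * c * L2_sqnorm a g" if "s > 0" for s
    using approx_split[OF that] by (rule le_of_forall_pos_le_add_mult)
  then have "L2_sqnorm a f \<le> c * L2_sqnorm a g"
  proof (intro tendsto_lowerbound)
    show "((\<lambda>s. (1 + s)\<^sup>2 * c * L2_sqnorm a g) \<longlongrightarrow> c * L2_sqnorm a g) (at_right 0)"
      by (auto intro!: tendsto_eq_intros)
  qed (auto simp: eventually_at_right_field intro: exI[of _ 1])
  then show ?thesis by (simp add: c_def)
qed

lemma H1dist2_bounds: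
  shows "L2_sqnorm a (\<lambda>p. f p - g p) \<le> H1dist2 a f D g"
    and "i \<in> Basis \<Longrightarrow> L2_sqnorm a (\<lambda>p. D i p - pd g i p) \<le> H1dist2 a f D g"
    and "0 \<le> H1dist2 a f D g"
proof -
  have "0 \<le> L2_sqnorm a (\<lambda>p. D i p - pd g i p)" for i
    by (rule L2_sqnorm_nonneg)
  then have "i \<in> Basis \<Longrightarrow> L2_sqnorm a (\<lambda>p. D i p - pd g i p)
      \<le> (\<Sum>i\<in>Basis. L2_sqnorm a (\<lambda>p. D i p - pd g i p))" and
    "0 \<le> (\<Sum>i\<in>Basis. L2_sqnorm a (\<lambda>p. D i p - pd g i p))"
    by (auto intro: member_le_sum sum_nonneg)
  then show "L2_sqnorm a (\<lambda>p. f p - g p) \<le> H1dist2 a f D g"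
    and "i \<in> Basis \<Longrightarrow> L2_sqnorm a (\<lambda>p. D i p - pd g i p) \<le> H1dist2 a f D g"
    and "0 \<le> H1dist2 a f D g"
    using L2_sqnorm_nonneg[of a "\<lambda>p. f p - g p"] unfolding H1dist2_def L2_sqnorm_def by linarith+
qed

lemma poincare_H1_closure:
  assumes a: "a > 0" and f: "L2 a f" and Dz: "L2 a (D ez)"
    and approx: "\<And>\<epsilon>. \<epsilon> > 0 \<Longrightarrow> \<exists>\<phi>. test0 a \<phi> \<and> H1dist2 a f D \<phi> < \<epsilon>"
  shows "L2_sqnorm a f \<le> (a/pi)\<^sup>2 * L2_sqnorm a (D ez)"
proof (rule poincare_closure[OF a f Dz])
  fix \<epsilon> :: real assume "\<epsilon> > 0"
  with approx obtain \<phi> where "test0 a \<phi>" "H1dist2 a f D \<phi> < \<epsilon>" by blast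
  then show "\<exists>\<phi>. test0 a \<phi> \<and> L2_sqnorm a (\<lambda>p. f p - \<phi> p) < \<epsilon> \<and>
      L2_sqnorm a (\<lambda>p. D ez p - pd \<phi> ez p) < \<epsilon>"
    using H1dist2_bounds[where a = a and f = f and g = \<phi> and D = D] ez_in_Basis by fastforce
qed

lemma poincare_inV:
  assumes a: "a > 0" and X: "inV a u Du v Dv \<theta> D\<theta>"
  shows "L2_sqnorm a u \<le> (a/pi)\<^sup>2 * L2_sqnorm a (Du ez)"
    and "L2_sqnorm a v \<le> (a/pi)\<^sup>2 * L2_sqnorm a (Dv ez)"
    and "L2_sqnorm a \<theta> \<le> (a/pi)\<^sup>2 * L2_sqnorm a (D\<theta> ez)"
proof -
  have V1: "inV1 a u Du v Dv" and V2: "inV2 a \<theta> D\<theta>"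
    using X by (auto simp: inV_def)
  then have H1: "H1 a u Du" "H1 a v Dv" "H1 a \<theta> D\<theta>"
    by (auto simp: inV1_def inV2_def)
  have "\<exists>\<phi>. test0 a \<phi> \<and> H1dist2 a u Du \<phi> < \<epsilon>" "\<exists>\<psi>. test0 a \<psi> \<and> H1dist2 a v Dv \<psi> < \<epsilon>"
    if \<epsilon>: "\<epsilon> > 0" for \<epsilon>
  proof -
    obtain \<phi> \<psi> where "test0 a \<phi>" "test0 a \<psi>" "H1dist2 a u Du \<phi> + H1dist2 a v Dv \<psi> < \<epsilon>"
      using V1 \<epsilon> unfolding inV1_def by blast
    with H1dist2_bounds(3)[of a u Du \<phi>] H1dist2_bounds(3)[of a v Dv \<psi>]
    show "\<exists>\<phi>. test0 a \<phi> \<and> H1dist2 a u Du \<phi> < \<epsilon>" "\<exists>\<psi>. test0 a \<psi> \<and> H1dist2 a v Dv \<psi> < \<epsilon>"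
      by auto
  qed
  then show "L2_sqnorm a u \<le> (a/pi)\<^sup>2 * L2_sqnorm a (Du ez)"
    and "L2_sqnorm a v \<le> (a/pi)\<^sup>2 * L2_sqnorm a (Dv ez)"
    using H1 ez_in_Basis by (auto intro!: poincare_H1_closure[OF a] simp: H1_def)
  show "L2_sqnorm a \<theta> \<le> (a/pi)\<^sup>2 * L2_sqnorm a (D\<theta> ez)"
    using V2 H1 ez_in_Basis by (auto intro!: poincare_H1_closure[OF a] simp: H1_def inV2_def)
qed

section \<open>Vertical primitives\<close>

definition set_z :: "pt \<Rightarrow> real \<Rightarrow> pt" where
  "set_z p t = (fst p, fst (snd p), t)"

definition zprimitive :: "fn \<Rightarrow> fn" where
  "zprimitive G p = (case p of (x, y, z) \<Rightarrow> LINT t:{0..z}|lborel. G (x, y, t))"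

lemma zprimitive_eq_integral:
  "zprimitive G p = (LINT t|lborel. indicator {0..snd (snd p)} t *\<^sub>R G (set_z p t))"
  by (cases p) (simp add: zprimitive_def set_z_def set_lebesgue_integral_def)

lemma borel_measurable_set_z: "(\<lambda>q. set_z (fst q) (snd q)) \<in> borel_measurable borel"
  unfolding set_z_def by (intro borel_measurable_continuous_onI continuous_intros)

lemma borel_measurable_pair_lborel:
  "f \<in> borel_measurable (borel :: ('a::euclidean_space \<times> 'b::euclidean_space) measure) \<Longrightarrow>
   f \<in> borel_measurable ((borel :: 'a measure) \<Otimes>\<^sub>M (lborel :: 'b measure))"
proof -
  have "sets ((borel :: 'a measure) \<Otimes>\<^sub>M (lborel :: 'b measure)) = sets (borel \<Otimes>\<^sub>M (borel :: 'b measure))"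
    by (intro sets_pair_measure_cong) auto
  then have "sets ((borel :: 'a measure) \<Otimes>\<^sub>M (lborel :: 'b measure)) = sets borel"
    by (simp only: borel_prod)
  from measurable_cong_sets[OF this refl]
  show "f \<in> borel_measurable borel \<Longrightarrow> f \<in> borel_measurable (borel \<Otimes>\<^sub>M lborel)"
    by blast
qed

lemma borel_measurable_vertical_nn_integral:
  fixes H :: "pt \<Rightarrow> ennreal"
  assumes "H \<in> borel_measurable borel"
  shows "(\<lambda>p. \<integral>\<^sup>+t. H (set_z p t) \<partial>lborel) \<in> borel_measurable borel"
proof -
  have "(\<lambda>q. H (set_z (fst q) (snd q))) \<in> borel_measurable ((borel :: pt measure) \<Otimes>\<^sub>M lborel)"
    using measurable_compose[OF borel_measurable_set_z assms]
    by (intro borel_measurable_pair_lborel) (simp add: o_def)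
  then have "(\<lambda>(p, t). H (set_z p t)) \<in> borel_measurable ((borel :: pt measure) \<Otimes>\<^sub>M lborel)"
    by (simp add: split_beta')
  then show ?thesis by (rule lborel.borel_measurable_nn_integral)
qed

lemma borel_measurable_zprimitive:
  assumes G: "G \<in> borel_measurable borel"
  shows "zprimitive G \<in> borel_measurable borel"
proof -
  have C: "{q :: pt \<times> real. 0 \<le> snd q \<and> snd q \<le> snd (snd (fst q))} \<in> sets borel"
    by (intro borel_closed closed_Collect_conj closed_Collect_le continuous_intros)
  have "(\<lambda>q. indicator {q :: pt \<times> real. 0 \<le> snd q \<and> snd q \<le> snd (snd (fst q))} q *\<^sub>R
      G (set_z (fst q) (snd q))) \<in> borel_measurable (borel \<Otimes>\<^sub>M lborel)"
    using measurable_compose[OF borel_measurable_set_z G] borel_measurable_indicator[OF C]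
    by (intro borel_measurable_pair_lborel borel_measurable_scaleR) (auto simp: o_def)
  then have "(\<lambda>(p, t). indicator {0..snd (snd p)} t *\<^sub>R G (set_z p t)) \<in> borel_measurable (borel \<Otimes>\<^sub>M lborel)"
    by (simp add: split_beta' indicator_def)
  from lborel.borel_measurable_lebesgue_integral[OF this] show ?thesis
    unfolding zprimitive_eq_integral[abs_def] .
qed

lemma borel_measurable_vertical_line:
  "G \<in> borel_measurable (borel :: pt measure) \<Longrightarrow> (\<lambda>t. G (x, y, t)) \<in> borel_measurable borel"
proof -
  assume "G \<in> borel_measurable borel"
  moreover have "(\<lambda>t::real. (x, y, t)) \<in> borel_measurable borel"
    by (intro borel_measurable_continuous_onI continuous_intros)
  ultimately show ?thesis
    by (rule measurable_compose[rotated])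
qed

lemma borel_measurable_MOm_borel: "f \<in> borel_measurable (borel :: pt measure) \<Longrightarrow> f \<in> borel_measurable (MOm a)"
  by (intro measurable_restrict_space1 measurable_completion) simp

lemma AE_MOm_not_in: "B \<in> null_sets (lborel :: pt measure) \<Longrightarrow> AE p in MOm a. p \<notin> B"
proof -
  assume "B \<in> null_sets lborel"
  then have "AE p in lebesgue. p \<notin> B" by (intro AE_completion AE_not_in)
  then show ?thesis by (subst AE_restrict_space_iff) (auto simp: Om_lebesgue elim: eventually_mono)
qed

lemma borel_representative_MOm:
  fixes G :: fn
  assumes G: "G \<in> borel_measurable (MOm a)"
  obtains G' N where "G' \<in> borel_measurable borel" and "N \<in> null_sets lborel"
    and "\<And>p. p \<in> Om a \<Longrightarrow> p \<notin> N \<Longrightarrow> G p = G' p"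
proof -
  define G0 where "G0 = (\<lambda>x. indicator (Om a) x *\<^sub>R G x)"
  have "G0 \<in> borel_measurable lebesgue"
    using G unfolding G0_def by (subst (asm) borel_measurable_restrict_space_iff) (auto simp: Om_lebesgue)
  then have Re: "(\<lambda>x. Re (G0 x)) \<in> borel_measurable (completion lborel)"
    and Im: "(\<lambda>x. Im (G0 x)) \<in> borel_measurable (completion lborel)" by measurable
  obtain r where r: "r \<in> borel_measurable lborel" "AE x in lborel. Re (G0 x) = r x"
    using completion_ex_borel_measurable_real[OF Re] by blast
  obtain i where i: "i \<in> borel_measurable lborel" "AE x in lborel. Im (G0 x) = i x"
    using completion_ex_borel_measurable_real[OF Im] by blast
  define G' where "G' = (\<lambda>x. Complex (r x) (i x))"
  have "AE x in lborel. G0 x = G' x"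
    using r(2) i(2) by eventually_elim (simp add: G'_def complex_eq_iff)
  then obtain N where N: "\<And>x. x \<in> space lborel - N \<Longrightarrow> G0 x = G' x" "N \<in> null_sets lborel"
    by (rule AE_E3) blast
  show ?thesis
  proof (rule that)
    show "G' \<in> borel_measurable borel"
      using r(1) i(1) unfolding G'_def borel_measurable_complex_iff by simp
    show "N \<in> null_sets lborel" by (fact N(2))
    fix p assume "p \<in> Om a" "p \<notin> N"
    then show "G p = G' p" using N(1)[of p] by (simp add: G0_def)
  qed
qed

lemma AE_vertical_lines:
  assumes N: "N \<in> null_sets (lborel :: pt measure)"
  shows "AE x in lborel. AE y in lborel. AE t in lborel. (x, y, t) \<notin> N"
proof -
  have "AE p in lborel \<Otimes>\<^sub>M lborel. p \<notin> N"
    using AE_not_in[OF N] unfolding lborel_prod .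
  then have "AE x in lborel. AE q in lborel. (x, q) \<notin> N"
    by (rule lborel_pair.AE_pair)
  then show ?thesis
  proof (rule eventually_mono)
    fix x assume "AE q in lborel. (x, q) \<notin> N"
    then have "AE q in lborel \<Otimes>\<^sub>M lborel. (x, q) \<notin> N" unfolding lborel_prod .
    then show "AE y in lborel. AE t in lborel. (x, y, t) \<notin> N"
      by (rule lborel_pair.AE_pair[of "\<lambda>q. (x, q) \<notin> N", simplified])
  qed
qed

lemma null_sets_vertical_lines:
  assumes N: "N \<in> null_sets (lborel :: pt measure)"
  obtains B where "B \<in> null_sets (lborel :: pt measure)"
    and "\<And>x y z. (x, y, z) \<notin> B \<Longrightarrow> AE t in lborel. (x, y, t) \<notin> N"
proof -
  have N_sets: "N \<in> sets borel" using N by (simp add: null_sets_def)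
  define Q where "Q = (\<lambda>p. \<integral>\<^sup>+t. indicator N (set_z p t) \<partial>lborel)"
  define B where "B = {p. Q p \<noteq> 0}"
  have "Q \<in> borel_measurable borel"
    unfolding Q_def by (intro borel_measurable_vertical_nn_integral borel_measurable_indicator N_sets)
  then have B_sets: "B \<in> sets borel"
    unfolding B_def by measurable
  have Q0: "Q (x, y, z) = 0 \<longleftrightarrow> (AE t in lborel. (x, y, t) \<notin> N)" for x y z
  proof -
    have "(\<lambda>t. indicator N (x, y, t) :: ennreal) \<in> borel_measurable lborel"
      using borel_measurable_vertical_line[OF borel_measurable_indicator[OF N_sets]] by simp
    then show ?thesis
      by (simp add: Q_def set_z_def nn_integral_0_iff_AE indicator_eq_0_iff)
  qed
  note lines = AE_vertical_lines[OF N]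
  have "emeasure lborel B = (\<integral>\<^sup>+p. indicator B p \<partial>lborel)"
    using B_sets by simp
  also have "\<dots> = (\<integral>\<^sup>+x. \<integral>\<^sup>+y. \<integral>\<^sup>+z. indicator B (x, y, z) \<partial>lborel \<partial>lborel \<partial>lborel)"
    by (rule nn_integral_lborel_pt) (rule borel_measurable_indicator[OF B_sets])
  also have "\<dots> = (\<integral>\<^sup>+(x::real). 0 \<partial>lborel)"
  proof (rule nn_integral_cong_AE)
    show "AE x in lborel. (\<integral>\<^sup>+y. \<integral>\<^sup>+z. indicator B (x, y, z) \<partial>lborel \<partial>lborel) = 0"
      using lines
    proof (rule eventually_mono)
      fix x assume "AE y in lborel. AE t in lborel. (x, y, t) \<notin> N"
      then have "(\<integral>\<^sup>+y. \<integral>\<^sup>+z. indicator B (x, y, z) \<partial>lborel \<partial>lborel) = (\<integral>\<^sup>+(y::real). 0 \<partial>lborel)"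
        by (rule nn_integral_cong_AE[OF eventually_mono]) (auto simp: B_def Q0)
      then show "(\<integral>\<^sup>+y. \<integral>\<^sup>+z. indicator B (x, y, z) \<partial>lborel \<partial>lborel) = 0" by simp
    qed
  qed
  finally have "B \<in> null_sets lborel"
    using B_sets by (simp add: null_sets_def)
  then show ?thesis
    by (rule that) (simp add: B_def Q0)
qed

text \<open>A slice \<open>t \<mapsto> G (x, y, t)\<close> of a merely Lebesgue measurable \<open>G\<close> need not be measurable, and
  then the Bochner integral in \<open>zprimitive G\<close> is \<open>0\<close> by convention; hence an inequality rather than
  an equality with the primitive of a Borel representative.\<close>
lemma zprimitive_AE_cmod_le:
  assumes G': "G' \<in> borel_measurable borel" and N: "N \<in> null_sets lborel"
    and eq: "\<And>p. p \<in> Om a \<Longrightarrow> p \<notin> N \<Longrightarrow> G p = G' p"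
  shows "AE p in MOm a. cmod (zprimitive G p) \<le> cmod (zprimitive G' p)"
proof -
  obtain B where B: "B \<in> null_sets (lborel :: pt measure)"
    and lines: "\<And>x y z. (x, y, z) \<notin> B \<Longrightarrow> AE t in lborel. (x, y, t) \<notin> N"
    using null_sets_vertical_lines[OF N] by blast
  have pointwise: "cmod (zprimitive G (x, y, z)) \<le> cmod (zprimitive G' (x, y, z))"
    if xyz: "(x, y, z) \<in> Om a" "(x, y, z) \<notin> B" for x y z
  proof -
    define g g' where "g t = indicator {0..z} t *\<^sub>R G (x, y, t)"
      and "g' t = indicator {0..z} t *\<^sub>R G' (x, y, t)" for t
    have ae: "AE t in lborel. g t = g' t"
      using lines[OF xyz(2)] AE_lborel_singleton[of 0]
    proof eventually_elim
      case (elim t)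
      show ?case
      proof (cases "t \<in> {0..z}")
        case True
        then have "(x, y, t) \<in> Om a" using xyz(1) elim by (auto simp: Om_def)
        then show ?thesis using eq[of "(x, y, t)"] elim by (simp add: g_def g'_def)
      qed (simp add: g_def g'_def)
    qed
    have g'_meas: "g' \<in> borel_measurable lborel"
      unfolding g'_def using borel_measurable_vertical_line[OF G'] by measurable
    have zp: "zprimitive G (x, y, z) = integral\<^sup>L lborel g"
      "zprimitive G' (x, y, z) = integral\<^sup>L lborel g'"
      unfolding g_def[abs_def] g'_def[abs_def] by (simp_all add: zprimitive_def set_lebesgue_integral_def)
    show ?thesis
    proof (cases "integrable lborel g")
      case True
      then have "integral\<^sup>L lborel g = integral\<^sup>L lborel g'"
        using ae g'_meas by (intro integral_cong_AE) auto
      then show ?thesis unfolding zp by simp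
    qed (simp add: zp not_integrable_integral_eq)
  qed
  show ?thesis
    using AE_MOm_not_in[OF B] AE_space[of "MOm a"]
  proof eventually_elim
    case (elim p)
    then show ?case
      using pointwise[of "fst p" "fst (snd p)" "snd (snd p)"] by simp
  qed
qed

lemma ennreal_power2_le:
  assumes "ennreal x \<le> y" and "0 \<le> x"
  shows "ennreal (x\<^sup>2) \<le> y\<^sup>2"
  using assms by (metis ennreal_power power_mono zero_le)

lemma zprimitive_sq_le:
  assumes G': "G' \<in> borel_measurable borel" and z: "0 < z" "z < a"
  shows "ennreal ((cmod (zprimitive G' (x, y, z)))\<^sup>2)
    \<le> ennreal z * (\<integral>\<^sup>+t. ennreal ((cmod (G' (x, y, t)))\<^sup>2) * indicator {0<..<a} t \<partial>lborel)"
proof (cases "integrable lborel (\<lambda>t. indicator {0..z} t *\<^sub>R G' (x, y, t))")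
  case False
  then show ?thesis
    by (simp add: zprimitive_def set_lebesgue_integral_def not_integrable_integral_eq)
next
  case True
  define F g where "F t = (indicator {0..z} t :: ennreal)"
    and "g t = ennreal (cmod (G' (x, y, t))) * indicator {0..z} t" for t
  have [measurable]: "(\<lambda>t. G' (x, y, t)) \<in> borel_measurable lborel"
    using borel_measurable_vertical_line[OF G'] by simp
  have "zprimitive G' (x, y, z) = (LINT t|lborel. indicator {0..z} t *\<^sub>R G' (x, y, t))"
    by (simp add: zprimitive_def set_lebesgue_integral_def)
  then have "ennreal (cmod (zprimitive G' (x, y, z)))
      \<le> (\<integral>\<^sup>+t. norm (indicator {0..z} t *\<^sub>R G' (x, y, t)) \<partial>lborel)"
    using integral_norm_bound_ennreal[OF True] by simp
  also have "\<dots> = (\<integral>\<^sup>+t. F t * g t \<partial>lborel)"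
    by (intro nn_integral_cong) (auto simp: F_def g_def indicator_def)
  finally have "ennreal (cmod (zprimitive G' (x, y, z))) \<le> (\<integral>\<^sup>+t. F t * g t \<partial>lborel)" .
  then have "ennreal ((cmod (zprimitive G' (x, y, z)))\<^sup>2) \<le> (\<integral>\<^sup>+t. F t * g t \<partial>lborel)\<^sup>2"
    by (rule ennreal_power2_le) simp
  also have "\<dots> \<le> (\<integral>\<^sup>+t. F t ^ 2 \<partial>lborel) * (\<integral>\<^sup>+t. g t ^ 2 \<partial>lborel)"
    by (rule Cauchy_Schwarz_nn_integral) (auto simp: F_def g_def)
  also have "(\<integral>\<^sup>+t. F t ^ 2 \<partial>lborel) = (\<integral>\<^sup>+t. indicator {0..z} t \<partial>lborel)"
    by (intro nn_integral_cong) (simp add: F_def indicator_def)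
  also have "\<dots> = ennreal z"
    using z by simp
  also have "ennreal z * (\<integral>\<^sup>+t. g t ^ 2 \<partial>lborel)
      \<le> ennreal z * (\<integral>\<^sup>+t. ennreal ((cmod (G' (x, y, t)))\<^sup>2) * indicator {0<..<a} t \<partial>lborel)"
  proof (intro mult_left_mono nn_integral_mono_AE)
    show "AE t in lborel. g t ^ 2 \<le> ennreal ((cmod (G' (x, y, t)))\<^sup>2) * indicator {0<..<a} t"
      using AE_lborel_singleton[of 0]
      by eventually_elim (use z in \<open>auto simp: g_def indicator_def ennreal_power[symmetric]\<close>)
  qed simp
  finally show ?thesis .
qed

lemma nn_integral_id_Ioo:
  assumes "a > 0"
  shows "(\<integral>\<^sup>+z. ennreal z * indicator {0<..<a} z \<partial>lborel) = ennreal (a\<^sup>2 / 2)"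
proof -
  have "((\<lambda>x::real. x) has_integral (a\<^sup>2 - 0\<^sup>2) / 2) {0..a}"
    using assms by (intro ident_has_integral) auto
  then have "((\<lambda>x::real. x) has_integral a\<^sup>2 / 2) (box 0 a)"
    by (simp only: has_integral_open_interval cbox_interval) simp
  then have "((\<lambda>x::real. x) has_integral a\<^sup>2 / 2) {0<..<a}"
    by (simp add: box_real)
  from nn_integral_has_integral_lebesgue'[OF _ this] show ?thesis by simp
qed

lemma nn_integral_MOm_height_weighted:
  fixes H :: "pt \<Rightarrow> ennreal"
  assumes a: "a > 0" and H: "H \<in> borel_measurable borel"
  shows "(\<integral>\<^sup>+p. ennreal (snd (snd p)) * (\<integral>\<^sup>+t. H (set_z p t) * indicator {0<..<a} t \<partial>lborel) \<partial>MOm a)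
    = ennreal (a\<^sup>2 / 2) * (\<integral>\<^sup>+p. H p \<partial>MOm a)"
proof -
  define Q where "Q p = (\<integral>\<^sup>+t. H (set_z p t) * indicator {0<..<a} t \<partial>lborel)" for p
  have [measurable]: "H \<in> borel_measurable borel" by (fact H)
  have [measurable]: "(\<lambda>q :: pt. snd (snd q)) \<in> borel_measurable borel"
    by (intro borel_measurable_continuous_onI continuous_intros)
  have "(\<lambda>q. H q * indicator {0<..<a} (snd (snd q))) \<in> borel_measurable borel"
    by measurable
  from borel_measurable_vertical_nn_integral[OF this]
  have [measurable]: "Q \<in> borel_measurable borel"
    by (simp add: Q_def[abs_def] set_z_def)
  have m1: "(\<lambda>p. ennreal (snd (snd p)) * Q p) \<in> borel_measurable borel"
    and m2: "(\<lambda>p. ennreal (a\<^sup>2 / 2) * H p) \<in> borel_measurable borel"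
    by measurable
  have "(\<integral>\<^sup>+p. ennreal (snd (snd p)) * Q p \<partial>MOm a) = (\<integral>\<^sup>+p. ennreal (a\<^sup>2 / 2) * H p \<partial>MOm a)"
    unfolding nn_integral_MOm_iterated[OF m1] nn_integral_MOm_iterated[OF m2]
  proof (rule nn_integral_cong, rule nn_integral_cong)
    fix x y :: real
    show "(\<integral>\<^sup>+z. ennreal (snd (snd (x, y, z))) * Q (x, y, z) * indicator (Om a) (x, y, z) \<partial>lborel)
      = (\<integral>\<^sup>+z. ennreal (a\<^sup>2 / 2) * H (x, y, z) * indicator (Om a) (x, y, z) \<partial>lborel)"
    proof (cases "x \<in> {0..<2*pi} \<and> y \<in> {0..<2*pi}")
      case False
      then show ?thesis by (auto simp: indicator_Om)
    next
      case True
      define q where "q = (\<integral>\<^sup>+t. H (x, y, t) * indicator {0<..<a} t \<partial>lborel)"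
      have Q_q: "Q (x, y, z) = q" for z
        by (simp add: Q_def q_def set_z_def)
      have "(\<integral>\<^sup>+z. ennreal (snd (snd (x, y, z))) * Q (x, y, z) * indicator (Om a) (x, y, z) \<partial>lborel)
          = (\<integral>\<^sup>+z. q * (ennreal z * indicator {0<..<a} z) \<partial>lborel)"
        using True by (intro nn_integral_cong) (simp add: indicator_Om Q_q mult_ac)
      also have "\<dots> = q * ennreal (a\<^sup>2 / 2)"
        by (subst nn_integral_cmult) (auto simp: nn_integral_id_Ioo[OF a])
      also have "\<dots> = (\<integral>\<^sup>+z. ennreal (a\<^sup>2 / 2) * (H (x, y, z) * indicator {0<..<a} z) \<partial>lborel)"
        unfolding q_def using borel_measurable_vertical_line[OF H]
        by (subst nn_integral_cmult) (auto intro!: borel_measurable_times_ennreal simp: mult.commute)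
      also have "\<dots> = (\<integral>\<^sup>+z. ennreal (a\<^sup>2 / 2) * H (x, y, z) * indicator (Om a) (x, y, z) \<partial>lborel)"
        using True by (intro nn_integral_cong) (simp add: indicator_Om mult_ac)
      finally show ?thesis .
    qed
  qed
  also have "\<dots> = ennreal (a\<^sup>2 / 2) * (\<integral>\<^sup>+p. H p \<partial>MOm a)"
    by (rule nn_integral_cmult) (measurable, auto intro: borel_measurable_MOm_borel)
  finally show ?thesis
    by (simp only: Q_def)
qed

lemma nn_integral_zprimitive_sq_le:
  assumes a: "a > 0" and G': "G' \<in> borel_measurable borel"
  shows "(\<integral>\<^sup>+p. ennreal ((cmod (zprimitive G' p))\<^sup>2) \<partial>MOm a)
    \<le> ennreal (a\<^sup>2 / 2) * (\<integral>\<^sup>+p. ennreal ((cmod (G' p))\<^sup>2) \<partial>MOm a)"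
proof -
  have "(\<integral>\<^sup>+p. ennreal ((cmod (zprimitive G' p))\<^sup>2) \<partial>MOm a)
      \<le> (\<integral>\<^sup>+p. ennreal (snd (snd p)) *
          (\<integral>\<^sup>+t. ennreal ((cmod (G' (set_z p t)))\<^sup>2) * indicator {0<..<a} t \<partial>lborel) \<partial>MOm a)"
    using zprimitive_sq_le[OF G'] by (intro nn_integral_mono) (auto simp: Om_def set_z_def)
  also have "\<dots> = ennreal (a\<^sup>2 / 2) * (\<integral>\<^sup>+p. ennreal ((cmod (G' p))\<^sup>2) \<partial>MOm a)"
    using G' by (intro nn_integral_MOm_height_weighted[OF a]) measurable
  finally show ?thesis .
qed

lemma nn_integral_sq_eq_L2_sqnorm:
  "L2 a f \<Longrightarrow> (\<integral>\<^sup>+p. ennreal ((cmod (f p))\<^sup>2) \<partial>MOm a) = ennreal (L2_sqnorm a f)"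
  unfolding L2_sqnorm_def by (rule nn_integral_eq_integral) (auto simp: L2_integrable_sq)

text \<open>A Hardy-type estimate: Cauchy--Schwarz is applied along each vertical segment and then
  on \<open>\<Omega>\<close>; integrating the length \<open>z\<close> of the segment over \<open>(0, a)\<close> produces \<open>a\<^sup>2/2\<close>.\<close>
theorem zprimitive_inner_bound:
  assumes a: "a > 0" and G: "L2 a G" and \<theta>: "L2 a \<theta>"
  shows "(cmod (LINT p|MOm a. zprimitive G p * cnj (\<theta> p)))\<^sup>2
     \<le> a\<^sup>2 / 2 * L2_sqnorm a G * L2_sqnorm a \<theta>"
proof (cases "integrable (MOm a) (\<lambda>p. zprimitive G p * cnj (\<theta> p))")
  case False
  then show ?thesis by (simp add: not_integrable_integral_eq L2_sqnorm_nonneg)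
next
  case True
  obtain G' N where G': "G' \<in> borel_measurable borel" and N: "N \<in> null_sets lborel"
    and eq: "\<And>p. p \<in> Om a \<Longrightarrow> p \<notin> N \<Longrightarrow> G p = G' p"
    using borel_representative_MOm[OF L2_measurable[OF G]] by blast
  have [measurable]: "zprimitive G' \<in> borel_measurable (MOm a)"
    by (intro borel_measurable_MOm_borel borel_measurable_zprimitive G')
  have [measurable]: "\<theta> \<in> borel_measurable (MOm a)"
    using \<theta> by measurable
  have "AE p in MOm a. G' p = G p"
    using AE_MOm_not_in[OF N] AE_space[of "MOm a"] by eventually_elim (simp add: eq)
  then have "(\<integral>\<^sup>+p. ennreal ((cmod (G' p))\<^sup>2) \<partial>MOm a) = (\<integral>\<^sup>+p. ennreal ((cmod (G p))\<^sup>2) \<partial>MOm a)"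
    by (rule nn_integral_cong_AE[OF eventually_mono]) simp
  then have G'_bound: "(\<integral>\<^sup>+p. ennreal (cmod (zprimitive G' p)) ^ 2 \<partial>MOm a)
      \<le> ennreal (a\<^sup>2 / 2) * ennreal (L2_sqnorm a G)"
    using nn_integral_zprimitive_sq_le[OF a G'] nn_integral_sq_eq_L2_sqnorm[OF G]
    by (simp add: ennreal_power)
  have "ennreal (cmod (LINT p|MOm a. zprimitive G p * cnj (\<theta> p)))
      \<le> (\<integral>\<^sup>+p. norm (zprimitive G p * cnj (\<theta> p)) \<partial>MOm a)"
    by (rule integral_norm_bound_ennreal[OF True])
  also have "\<dots> \<le> (\<integral>\<^sup>+p. ennreal (cmod (zprimitive G' p)) * ennreal (cmod (\<theta> p)) \<partial>MOm a)"
  proof (rule nn_integral_mono_AE)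
    have "AE p in MOm a. cmod (zprimitive G p) \<le> cmod (zprimitive G' p)"
      using G' N eq by (rule zprimitive_AE_cmod_le)
    then show "AE p in MOm a. ennreal (norm (zprimitive G p * cnj (\<theta> p)))
        \<le> ennreal (cmod (zprimitive G' p)) * ennreal (cmod (\<theta> p))"
      by eventually_elim (simp add: norm_mult ennreal_mult[symmetric] mult_right_mono)
  qed
  finally have "ennreal ((cmod (LINT p|MOm a. zprimitive G p * cnj (\<theta> p)))\<^sup>2)
      \<le> (\<integral>\<^sup>+p. ennreal (cmod (zprimitive G' p)) * ennreal (cmod (\<theta> p)) \<partial>MOm a)\<^sup>2"
    by (rule ennreal_power2_le) simp
  also have "\<dots> \<le> (\<integral>\<^sup>+p. ennreal (cmod (zprimitive G' p)) ^ 2 \<partial>MOm a)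
      * (\<integral>\<^sup>+p. ennreal (cmod (\<theta> p)) ^ 2 \<partial>MOm a)"
    by (rule Cauchy_Schwarz_nn_integral) measurable
  also have "\<dots> \<le> ennreal (a\<^sup>2 / 2) * ennreal (L2_sqnorm a G) * ennreal (L2_sqnorm a \<theta>)"
    using G'_bound nn_integral_sq_eq_L2_sqnorm[OF \<theta>]
    by (simp add: ennreal_power mult_right_mono)
  also have "\<dots> = ennreal (a\<^sup>2 / 2 * L2_sqnorm a G * L2_sqnorm a \<theta>)"
    by (simp only: ennreal_mult'' L2_sqnorm_nonneg)
  finally show ?thesis
    by (subst (asm) ennreal_le_iff) (auto intro!: mult_nonneg_nonneg L2_sqnorm_nonneg)
qed

section \<open>Energy estimates and the eigenvalue bound\<close>

lemma L2_sqnorm_eq_0_iff: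
  assumes "L2 a f"
  shows "L2_sqnorm a f = 0 \<longleftrightarrow> (AE p in MOm a. f p = 0)"
  using assms by (simp add: L2_sqnorm_def L2_integrable_sq integral_nonneg_eq_0_iff_AE)

definition grad_sqnorm :: "real \<Rightarrow> grad \<Rightarrow> real" where
  "grad_sqnorm a D = (LINT p|MOm a. (\<Sum>i\<in>Basis. (cmod (D i p))\<^sup>2))"

lemma grad_sqnorm_eq_sum:
  assumes "\<And>i. i \<in> Basis \<Longrightarrow> L2 a (D i)"
  shows "grad_sqnorm a D = (\<Sum>i\<in>Basis. L2_sqnorm a (D i))"
  using assms by (simp add: grad_sqnorm_def L2_sqnorm_def L2_integrable_sq)

lemma L2_sqnorm_le_grad_sqnorm:
  assumes "\<And>i. i \<in> Basis \<Longrightarrow> L2 a (D i)" and "i \<in> Basis"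
  shows "L2_sqnorm a (D i) \<le> grad_sqnorm a D"
proof -
  have "L2_sqnorm a (D i) \<le> (\<Sum>i\<in>Basis. L2_sqnorm a (D i))"
    using assms(2) by (intro member_le_sum) (auto simp: L2_sqnorm_nonneg)
  then show ?thesis using grad_sqnorm_eq_sum[OF assms(1)] by simp
qed

lemma Hform_self:
  assumes "L2 a u" "L2 a v" "L2 a \<theta>"
  shows "Hform a \<beta> \<gamma> u v \<theta> u v \<theta>
    = of_real (L2_sqnorm a u + L2_sqnorm a v + \<beta> / \<gamma> * L2_sqnorm a \<theta>)"
proof -
  have "Hform a \<beta> \<gamma> u v \<theta> u v \<theta>
      = (LINT p|MOm a. of_real ((cmod (u p))\<^sup>2 + (cmod (v p))\<^sup>2 + \<beta> / \<gamma> * (cmod (\<theta> p))\<^sup>2))"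
    unfolding Hform_def by (simp only: of_real_add of_real_mult complex_norm_square mult.assoc)
  also have "\<dots> = of_real (LINT p|MOm a. (cmod (u p))\<^sup>2 + (cmod (v p))\<^sup>2 + \<beta> / \<gamma> * (cmod (\<theta> p))\<^sup>2)"
    by (rule integral_complex_of_real)
  also have "(LINT p|MOm a. (cmod (u p))\<^sup>2 + (cmod (v p))\<^sup>2 + \<beta> / \<gamma> * (cmod (\<theta> p))\<^sup>2)
      = L2_sqnorm a u + L2_sqnorm a v + \<beta> / \<gamma> * L2_sqnorm a \<theta>"
    using assms by (simp add: L2_sqnorm_def L2_integrable_sq)
  finally show ?thesis .
qed

lemma Vform_self:
  assumes "\<And>i. i \<in> Basis \<Longrightarrow> L2 a (Du i)" "\<And>i. i \<in> Basis \<Longrightarrow> L2 a (Dv i)"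
    "\<And>i. i \<in> Basis \<Longrightarrow> L2 a (D\<theta> i)"
  shows "Vform a \<beta> \<gamma> Du Dv D\<theta> Du Dv D\<theta>
    = of_real (grad_sqnorm a Du + grad_sqnorm a Dv + \<beta> / \<gamma> * grad_sqnorm a D\<theta>)"
proof -
  have gradip: "gradip D D p = of_real (\<Sum>i\<in>Basis. (cmod (D i p))\<^sup>2)" for D p
    by (simp add: gradip_def complex_norm_square del: of_real_power)
  have int: "integrable (MOm a) (\<lambda>p. \<Sum>i\<in>Basis. (cmod (D i p))\<^sup>2)"
    if "\<And>i. i \<in> Basis \<Longrightarrow> L2 a (D i)" for D
    using that by (intro Bochner_Integration.integrable_sum) (auto intro: L2_integrable_sq)
  have "Vform a \<beta> \<gamma> Du Dv D\<theta> Du Dv D\<theta>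
      = (LINT p|MOm a. of_real ((\<Sum>i\<in>Basis. (cmod (Du i p))\<^sup>2) + (\<Sum>i\<in>Basis. (cmod (Dv i p))\<^sup>2)
          + \<beta> / \<gamma> * (\<Sum>i\<in>Basis. (cmod (D\<theta> i p))\<^sup>2)))"
    unfolding Vform_def gradip by (simp only: of_real_add of_real_mult)
  also have "\<dots> = of_real (LINT p|MOm a. (\<Sum>i\<in>Basis. (cmod (Du i p))\<^sup>2) + (\<Sum>i\<in>Basis. (cmod (Dv i p))\<^sup>2)
          + \<beta> / \<gamma> * (\<Sum>i\<in>Basis. (cmod (D\<theta> i p))\<^sup>2))"
    by (rule integral_complex_of_real)
  also have "(LINT p|MOm a. (\<Sum>i\<in>Basis. (cmod (Du i p))\<^sup>2) + (\<Sum>i\<in>Basis. (cmod (Dv i p))\<^sup>2)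
          + \<beta> / \<gamma> * (\<Sum>i\<in>Basis. (cmod (D\<theta> i p))\<^sup>2))
      = grad_sqnorm a Du + grad_sqnorm a Dv + \<beta> / \<gamma> * grad_sqnorm a D\<theta>"
    using int[of Du, OF assms(1)] int[of Dv, OF assms(2)] int[of D\<theta>, OF assms(3)]
    by (simp add: grad_sqnorm_def)
  finally show ?thesis .
qed

lemma integral_mult_cnj_commute:
  "(LINT p|M. f p * cnj (g p)) = cnj (LINT p|M. g p * cnj (f p))"
proof -
  have "(LINT p|M. f p * cnj (g p)) = (LINT p|M. cnj (g p * cnj (f p)))"
    by (simp add: mult.commute)
  also have "\<dots> = cnj (LINT p|M. g p * cnj (f p))"
    by (rule Bochner_Integration.integral_cnj)
  finally show ?thesis .
qed

lemma Bform_self: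
  "Bform a \<theta> Du Dv \<theta> Du Dv = J - cnj J"
  if "J = (LINT p|MOm a. wfun Du Dv p * cnj (\<theta> p))"
  using that by (simp add: Bform_def integral_mult_cnj_commute[of _ \<theta>])

lemma Cform_self:
  "Cform a u v u v = K - cnj K"
  if "K = (LINT p|MOm a. u p * cnj (v p))"
  using that by (simp add: Cform_def integral_mult_cnj_commute[of _ v])

lemma wfun_eq_zprimitive:
  "wfun Du Dv p = - zprimitive (\<lambda>q. Du ex q + Dv ey q) p"
  by (cases p) (simp add: wfun_def zprimitive_def)

lemma coupling_sqrt_bound:
  fixes J :: complex and H R T a \<beta> \<gamma> :: real
  assumes a: "a > 0" and \<beta>: "\<beta> > 0" and \<gamma>: "\<gamma> > 0" and H: "H > 0" and R: "R \<ge> 0"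
    and J: "(cmod J)\<^sup>2 \<le> a\<^sup>2 * (R * H) * T" and T_le: "\<beta> / \<gamma> * T \<le> H"
  shows "\<beta> * (2 * cmod J) \<le> 2 * a * sqrt (\<beta> * \<gamma>) * sqrt R * H"
proof -
  define c where "c = \<beta> / \<gamma>"
  have c: "c > 0" using \<beta> \<gamma> by (simp add: c_def)
  have "T \<le> H / c"
    using T_le c by (simp add: c_def[symmetric] pos_le_divide_eq mult.commute)
  moreover have "0 \<le> a\<^sup>2 * (R * H)" using R H by simp
  ultimately have "a\<^sup>2 * (R * H) * T \<le> a\<^sup>2 * (R * H) * (H / c)" by (rule mult_left_mono)
  with J have "(cmod J)\<^sup>2 \<le> a\<^sup>2 * (R * H) * (H / c)" by linarith
  also have "\<dots> = (a * H * sqrt (R / c))\<^sup>2"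
  proof -
    have "(sqrt (R / c))\<^sup>2 = R / c" using R c by simp
    then show ?thesis unfolding power_mult_distrib by (simp add: power2_eq_square)
  qed
  finally have "(cmod J)\<^sup>2 \<le> (a * H * sqrt (R / c))\<^sup>2" .
  moreover have "0 \<le> a * H * sqrt (R / c)" using a H R c by simp
  ultimately have J_le: "cmod J \<le> a * H * sqrt (R / c)" by (rule power2_le_imp_le)
  have sqrt_eq: "\<beta> * sqrt (R / c) = sqrt (\<beta> * \<gamma>) * sqrt R"
  proof -
    have "\<beta> * sqrt (R / c) = sqrt (\<beta>\<^sup>2) * sqrt (R / c)"
      using \<beta> by simp
    also have "\<dots> = sqrt (\<beta>\<^sup>2 * (R / c))"
      by (rule real_sqrt_mult[symmetric])
    also have "\<beta>\<^sup>2 * (R / c) = (\<beta> * \<gamma>) * R"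
      using \<beta> \<gamma> by (simp add: c_def power2_eq_square field_simps)
    finally show ?thesis by (simp add: real_sqrt_mult)
  qed
  have "\<beta> * (2 * cmod J) \<le> \<beta> * (2 * (a * H * sqrt (R / c)))"
    using J_le \<beta> by simp
  also have "\<dots> = 2 * a * H * (\<beta> * sqrt (R / c))"
    by (simp only: mult_ac)
  also have "\<dots> = 2 * a * sqrt (\<beta> * \<gamma>) * sqrt R * H"
    by (simp only: sqrt_eq mult_ac)
  finally show ?thesis .
qed

text \<open>Here \<open>H\<close>, \<open>V\<close> and \<open>T\<close> stand for \<open>\<parallel>X\<parallel>\<^sub>\<H>\<^sup>2\<close>, \<open>\<parallel>X\<parallel>\<^sub>\<V>\<^sup>2\<close> and \<open>\<parallel>\<theta>\<parallel>\<^sup>2\<close>; the forms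
  \<open>B(X, X)\<close> and \<open>C(X, X)\<close> enter only through \<open>J - cnj J\<close> and \<open>K - cnj K\<close>.\<close>
lemma eigenvalue_bound_from_energy:
  fixes lam J K :: complex and H V T a \<nu> \<alpha> \<beta> \<gamma> :: real
  assumes a: "a > 0" and \<nu>: "\<nu> > 0" and \<alpha>: "\<alpha> \<ge> 0" and \<beta>: "\<beta> > 0" and \<gamma>: "\<gamma> > 0"
    and H: "H > 0"
    and eq: "lam * of_real H + (of_real \<nu> * of_real V + of_real \<beta> * (J - cnj J) + of_real \<alpha> * (K - cnj K)) = 0"
    and poincare: "H \<le> (a/pi)\<^sup>2 * V"
    and J: "(cmod J)\<^sup>2 \<le> a\<^sup>2 * V * T" and T_le: "\<beta> / \<gamma> * T \<le> H"
    and K: "2 * cmod K \<le> H"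
  shows "Re lam \<le> - \<nu> * pi\<^sup>2 / a\<^sup>2 \<and>
    \<bar>Im lam\<bar> \<le> 2 * \<alpha> + 2 * a * sqrt (\<beta> * \<gamma>) * sqrt (- Re lam / \<nu>)"
proof
  have Re_eq: "Re lam * H = - (\<nu> * V)"
    and Im_eq: "Im lam * H = - (\<beta> * (2 * Im J) + \<alpha> * (2 * Im K))"
    using arg_cong[OF eq, of Re] arg_cong[OF eq, of Im] by (simp_all add: add_eq_0_iff)
  have "pi\<^sup>2 / a\<^sup>2 * H \<le> V"
    using poincare a by (simp add: power_divide field_simps)
  then have "\<nu> * (pi\<^sup>2 / a\<^sup>2 * H) \<le> \<nu> * V"
    using \<nu> by (intro mult_left_mono) auto
  then have "Re lam * H \<le> (- \<nu> * pi\<^sup>2 / a\<^sup>2) * H"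
    unfolding Re_eq by simp
  then show Re: "Re lam \<le> - \<nu> * pi\<^sup>2 / a\<^sup>2"
    using H by (rule mult_right_le_imp_le)
  define R where "R = - Re lam / \<nu>"
  have "0 \<le> \<nu> * pi\<^sup>2 / a\<^sup>2" using \<nu> by simp
  then have "Re lam \<le> 0" using Re by linarith
  then have R: "R \<ge> 0" using \<nu> by (simp add: R_def divide_nonpos_pos)
  have "V = R * H" using Re_eq \<nu> by (simp add: R_def field_simps)
  with J have J': "\<beta> * (2 * cmod J) \<le> 2 * a * sqrt (\<beta> * \<gamma>) * sqrt R * H"
    using a \<beta> \<gamma> H R T_le by (intro coupling_sqrt_bound) simp_all
  have "\<bar>Im lam\<bar> * H = \<bar>Im lam * H\<bar>"
    using H by (simp add: abs_mult)
  also have "\<dots> = \<bar>\<beta> * (2 * Im J) + \<alpha> * (2 * Im K)\<bar>"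
    unfolding Im_eq by (rule abs_minus_cancel)
  also have "\<dots> \<le> \<beta> * (2 * cmod J) + \<alpha> * (2 * cmod K)"
    using \<alpha> \<beta> abs_Im_le_cmod[of J] abs_Im_le_cmod[of K]
    by (intro order_trans[OF abs_triangle_ineq] add_mono) (auto simp: abs_mult intro: mult_left_mono)
  also have "\<dots> \<le> (2 * a * sqrt (\<beta> * \<gamma>) * sqrt R + \<alpha>) * H"
    using J' K \<alpha> mult_left_mono[of "2 * cmod K" H \<alpha>] by (simp add: algebra_simps)
  finally have "\<bar>Im lam\<bar> \<le> 2 * a * sqrt (\<beta> * \<gamma>) * sqrt R + \<alpha>"
    using H by simp
  then show "\<bar>Im lam\<bar> \<le> 2 * \<alpha> + 2 * a * sqrt (\<beta> * \<gamma>) * sqrt (- Re lam / \<nu>)"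
    using \<alpha> by (simp add: R_def)
qed

lemma ex_ey_in_Basis: "ex \<in> Basis" "ey \<in> Basis"
  by (simp_all add: Basis_pt)

lemma inV_L2:
  assumes "inV a u Du v Dv \<theta> D\<theta>"
  shows "L2 a u" "L2 a v" "L2 a \<theta>"
    and "\<And>i. i \<in> Basis \<Longrightarrow> L2 a (Du i)" "\<And>i. i \<in> Basis \<Longrightarrow> L2 a (Dv i)"
    "\<And>i. i \<in> Basis \<Longrightarrow> L2 a (D\<theta> i)"
  using assms by (auto simp: inV_def inV1_def inV2_def H1_def)

lemma poincare_energy:
  assumes a: "a > 0" and X: "inV a u Du v Dv \<theta> D\<theta>" and c: "c \<ge> 0"
  shows "L2_sqnorm a u + L2_sqnorm a v + c * L2_sqnorm a \<theta>
    \<le> (a/pi)\<^sup>2 * (grad_sqnorm a Du + grad_sqnorm a Dv + c * grad_sqnorm a D\<theta>)"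
proof -
  note L2 = inV_L2[OF X]
  have k: "0 \<le> (a/pi)\<^sup>2" by simp
  have "L2_sqnorm a u \<le> (a/pi)\<^sup>2 * grad_sqnorm a Du"
    using poincare_inV(1)[OF a X] mult_left_mono[OF L2_sqnorm_le_grad_sqnorm[where D = Du, OF L2(4) ez_in_Basis] k]
    by linarith
  moreover have "L2_sqnorm a v \<le> (a/pi)\<^sup>2 * grad_sqnorm a Dv"
    using poincare_inV(2)[OF a X] mult_left_mono[OF L2_sqnorm_le_grad_sqnorm[where D = Dv, OF L2(5) ez_in_Basis] k]
    by linarith
  moreover have "L2_sqnorm a \<theta> \<le> (a/pi)\<^sup>2 * grad_sqnorm a D\<theta>"
    using poincare_inV(3)[OF a X] mult_left_mono[OF L2_sqnorm_le_grad_sqnorm[where D = D\<theta>, OF L2(6) ez_in_Basis] k]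
    by linarith
  then have "c * L2_sqnorm a \<theta> \<le> c * ((a/pi)\<^sup>2 * grad_sqnorm a D\<theta>)"
    using c by (rule mult_left_mono)
  moreover have "(a/pi)\<^sup>2 * (grad_sqnorm a Du + grad_sqnorm a Dv + c * grad_sqnorm a D\<theta>)
      = (a/pi)\<^sup>2 * grad_sqnorm a Du + (a/pi)\<^sup>2 * grad_sqnorm a Dv + c * ((a/pi)\<^sup>2 * grad_sqnorm a D\<theta>)"
    by (simp add: algebra_simps)
  ultimately show ?thesis by linarith
qed

lemma coupling_C_bound:
  assumes u: "L2 a u" and v: "L2 a v"
  shows "2 * cmod (LINT p|MOm a. u p * cnj (v p)) \<le> L2_sqnorm a u + L2_sqnorm a v"
proof -
  have "cmod (LINT p|MOm a. u p * cnj (v p)) \<le> (LINT p|MOm a. norm (u p * cnj (v p)))"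
    by (rule integral_norm_bound)
  also have "\<dots> \<le> (LINT p|MOm a. ((cmod (u p))\<^sup>2 + (cmod (v p))\<^sup>2) / 2)"
  proof (rule integral_mono)
    show "integrable (MOm a) (\<lambda>p. norm (u p * cnj (v p)))"
      using L2_integrable_mult_cnj[OF u v] by (rule integrable_norm)
    show "integrable (MOm a) (\<lambda>p. ((cmod (u p))\<^sup>2 + (cmod (v p))\<^sup>2) / 2)"
      using u v by (simp add: L2_integrable_sq)
    fix p
    have "2 * (cmod (u p) * cmod (v p)) \<le> (cmod (u p))\<^sup>2 + (cmod (v p))\<^sup>2"
      using sum_squares_bound[of "cmod (u p)" "cmod (v p)"] by (simp add: mult.assoc)
    then show "norm (u p * cnj (v p)) \<le> ((cmod (u p))\<^sup>2 + (cmod (v p))\<^sup>2) / 2"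
      by (simp add: norm_mult)
  qed
  also have "\<dots> = (L2_sqnorm a u + L2_sqnorm a v) / 2"
    using u v by (simp add: L2_sqnorm_def L2_integrable_sq)
  finally show ?thesis by simp
qed

lemma grad_sqnorm_nonneg: "0 \<le> grad_sqnorm a D"
  by (simp add: grad_sqnorm_def sum_nonneg)

lemma coupling_B_bound:
  assumes a: "a > 0" and X: "inV a u Du v Dv \<theta> D\<theta>" and c: "c \<ge> 0"
  shows "(cmod (LINT p|MOm a. wfun Du Dv p * cnj (\<theta> p)))\<^sup>2
    \<le> a\<^sup>2 * (grad_sqnorm a Du + grad_sqnorm a Dv + c * grad_sqnorm a D\<theta>) * L2_sqnorm a \<theta>"
proof -
  note L2 = inV_L2[OF X]
  define G where "G q = Du ex q + Dv ey q" for q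
  have L2_x: "L2 a (Du ex)" and L2_y: "L2 a (Dv ey)"
    using L2(4,5) ex_ey_in_Basis by auto
  have G: "L2 a G"
    unfolding G_def[abs_def] using L2_x L2_y by (rule L2_add)
  have "(cmod (G p))\<^sup>2 \<le> 2 * (cmod (Du ex p))\<^sup>2 + 2 * (cmod (Dv ey p))\<^sup>2" for p
    using norm_diff_sq_le[of "Du ex p" "- Dv ey p"] by (simp add: G_def)
  then have "L2_sqnorm a G \<le> (LINT p|MOm a. 2 * (cmod (Du ex p))\<^sup>2 + 2 * (cmod (Dv ey p))\<^sup>2)"
    unfolding L2_sqnorm_def
    by (rule integral_mono[OF L2_integrable_sq[OF G], rotated])
      (use L2_x L2_y in \<open>simp add: L2_integrable_sq\<close>)
  also have "\<dots> = 2 * (L2_sqnorm a (Du ex) + L2_sqnorm a (Dv ey))"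
    using L2_x L2_y by (simp add: L2_sqnorm_def L2_integrable_sq)
  also have "\<dots> \<le> 2 * (grad_sqnorm a Du + grad_sqnorm a Dv)"
  proof -
    have "L2_sqnorm a (Du ex) \<le> grad_sqnorm a Du"
      using L2(4) ex_ey_in_Basis(1) by (rule L2_sqnorm_le_grad_sqnorm)
    moreover have "L2_sqnorm a (Dv ey) \<le> grad_sqnorm a Dv"
      using L2(5) ex_ey_in_Basis(2) by (rule L2_sqnorm_le_grad_sqnorm)
    ultimately show ?thesis by (simp add: add_mono)
  qed
  finally have G_le: "L2_sqnorm a G \<le> 2 * (grad_sqnorm a Du + grad_sqnorm a Dv)" .
  have "cmod (LINT p|MOm a. wfun Du Dv p * cnj (\<theta> p)) = cmod (LINT p|MOm a. zprimitive G p * cnj (\<theta> p))"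
    by (simp add: wfun_eq_zprimitive G_def[abs_def])
  then have "(cmod (LINT p|MOm a. wfun Du Dv p * cnj (\<theta> p)))\<^sup>2 \<le> a\<^sup>2 / 2 * L2_sqnorm a G * L2_sqnorm a \<theta>"
    using zprimitive_inner_bound[OF a G L2(3)] by simp
  also have "\<dots> \<le> a\<^sup>2 / 2 * (2 * (grad_sqnorm a Du + grad_sqnorm a Dv)) * L2_sqnorm a \<theta>"
    using G_le by (intro mult_right_mono mult_left_mono L2_sqnorm_nonneg) simp_all
  also have "\<dots> = a\<^sup>2 * (grad_sqnorm a Du + grad_sqnorm a Dv) * L2_sqnorm a \<theta>"
    by simp
  also have "\<dots> \<le> a\<^sup>2 * (grad_sqnorm a Du + grad_sqnorm a Dv + c * grad_sqnorm a D\<theta>) * L2_sqnorm a \<theta>"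
    using c grad_sqnorm_nonneg[of a D\<theta>]
    by (intro mult_right_mono mult_left_mono L2_sqnorm_nonneg) simp_all
  finally show ?thesis .
qed

lemma L2_energy_pos:
  assumes "L2 a u" "L2 a v" "L2 a \<theta>" and c: "c > 0"
    and nonzero: "\<not> (AE p in MOm a. u p = 0 \<and> v p = 0 \<and> \<theta> p = 0)"
  shows "0 < L2_sqnorm a u + L2_sqnorm a v + c * L2_sqnorm a \<theta>"
proof (rule ccontr)
  assume "\<not> ?thesis"
  moreover have "0 \<le> c * L2_sqnorm a \<theta>"
    using c by (simp add: L2_sqnorm_nonneg)
  ultimately have "L2_sqnorm a u = 0" "L2_sqnorm a v = 0" "c * L2_sqnorm a \<theta> = 0"
    using L2_sqnorm_nonneg[of a u] L2_sqnorm_nonneg[of a v] by linarith+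
  then have "AE p in MOm a. u p = 0" "AE p in MOm a. v p = 0" "AE p in MOm a. \<theta> p = 0"
    using assms(1-3) c by (simp_all add: L2_sqnorm_eq_0_iff)
  then have "AE p in MOm a. u p = 0 \<and> v p = 0 \<and> \<theta> p = 0"
    by eventually_elim simp
  with nonzero show False ..
qed

theorem lemma3:
  fixes a \<nu> \<alpha> \<beta> \<gamma> :: real
  assumes "a > 0" and "\<nu> > 0" and "\<alpha> \<ge> 0" and "\<beta> > 0" and "\<gamma> > 0"
  shows "eigP a \<nu> \<alpha> \<beta> \<gamma> \<subseteq> {lam. Re lam \<le> - \<nu> * pi\<^sup>2 / a\<^sup>2 \<and>
           \<bar>Im lam\<bar> \<le> 2 * \<alpha> + 2 * a * sqrt (\<beta> * \<gamma>) * sqrt (- Re lam / \<nu>)}"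
proof
  fix lam assume "lam \<in> eigP a \<nu> \<alpha> \<beta> \<gamma>"
  then obtain u Du v Dv \<theta> D\<theta> where X: "inV a u Du v Dv \<theta> D\<theta>"
    and nonzero: "\<not> (AE p in MOm a. u p = 0 \<and> v p = 0 \<and> \<theta> p = 0)"
    and eq: "lam * Hform a \<beta> \<gamma> u v \<theta> u v \<theta>
        + (of_real \<nu> * Vform a \<beta> \<gamma> Du Dv D\<theta> Du Dv D\<theta>
           + of_real \<beta> * Bform a \<theta> Du Dv \<theta> Du Dv + of_real \<alpha> * Cform a u v u v) = 0"
    unfolding eigP_def by blast
  note L2 = inV_L2[OF X]
  define c where "c = \<beta> / \<gamma>"
  define H where "H = L2_sqnorm a u + L2_sqnorm a v + c * L2_sqnorm a \<theta>"
  define V where "V = grad_sqnorm a Du + grad_sqnorm a Dv + c * grad_sqnorm a D\<theta>"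
  define J where "J = (LINT p|MOm a. wfun Du Dv p * cnj (\<theta> p))"
  define K where "K = (LINT p|MOm a. u p * cnj (v p))"
  have c: "c > 0" using assms by (simp add: c_def)
  have "Vform a \<beta> \<gamma> Du Dv D\<theta> Du Dv D\<theta> = of_real V"
    unfolding V_def c_def using L2(4-6) by (rule Vform_self)
  then have "lam * of_real H + (of_real \<nu> * of_real V + of_real \<beta> * (J - cnj J) + of_real \<alpha> * (K - cnj K)) = 0"
    using eq unfolding Hform_self[OF L2(1-3)] Bform_self[OF J_def] Cform_self[OF K_def]
    by (simp add: H_def c_def)
  moreover have "2 * cmod K \<le> H" and "\<beta> / \<gamma> * L2_sqnorm a \<theta> \<le> H"
    using coupling_C_bound[OF L2(1,2), folded K_def] mult_nonneg_nonneg[of c "L2_sqnorm a \<theta>"] c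
      L2_sqnorm_nonneg[of a u] L2_sqnorm_nonneg[of a v] L2_sqnorm_nonneg[of a \<theta>]
    by (simp_all add: H_def c_def)
  ultimately show "lam \<in> {lam. Re lam \<le> - \<nu> * pi\<^sup>2 / a\<^sup>2 \<and>
      \<bar>Im lam\<bar> \<le> 2 * \<alpha> + 2 * a * sqrt (\<beta> * \<gamma>) * sqrt (- Re lam / \<nu>)}"
    using eigenvalue_bound_from_energy[OF assms L2_energy_pos[OF L2(1-3) c nonzero, folded H_def]
        _ poincare_energy[OF assms(1) X, of c, folded H_def V_def]
        coupling_B_bound[OF assms(1) X, of c, folded J_def V_def]] c
    by simp
qed

end
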